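(* Let $N\geq2$, $m\in\mathbb{N}$, and let $K:(0,+\infty)\to[0,+\infty)$ be continuous with $$\int_0^{+\infty}K(t)\,t^{N-1+i}\,dt\in(0,+\infty]\quad\text{for } i=2,3,\dots,m.$$ For $\epsilon\in(0,1)$ and $i,j\in\{2,\dots,m\}$ let $\kappa_{i,j}(\epsilon)=\dfrac{\int_\epsilon^{1/\epsilon}K(t)t^{N-1+j}dt}{\int_\epsilon^{1/\epsilon}K(t)t^{N-1+i}dt}$. If either $\lim_{\epsilon\to0^+}\kappa_{i,j}(\epsilon)=0$ for all $i,j\in\{2,\dots,m\}$ with $i>j$, or $\lim_{\epsilon\to0^+}\kappa_{i,j}(\epsilon)=0$ for all $i,j\in\{2,\dots,m\}$ with $i<j$, then $\mathcal{H}_m^{K}(\mathbb{R}^N)=\mathcal{H}_m^1(\mathbb{R}^N)$. In particular, for $m=0,1$, $\mathcal{H}_m^{K}(\mathbb{R}^N)=\mathcal{H}_m^1(\mathbb{R}^N)=\mathbb{P}_m(\mathbb{R}^N)$.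
   Context: $\mathbb{N}=\{0,1,2,\dots\}$. For a continuous kernel $K:(0,\infty)\to[0,\infty)$ and $u:\mathbb{R}^N\to\mathbb{R}$, define $\mathcal{L}_K u(x)=\lim_{\epsilon\to0^+}\int_{B_{1/\epsilon}\setminus B_\epsilon}\big(u(x)-u(x+z)\big)K(|z|)\,dz$ ($B_r$ the ball of radius $r$ centered at $0$). $\mathbb{P}_m(\mathbb{R}^N)=\{\sum_{|\alpha|=m}b_\alpha x^\alpha:\alpha\in\mathbb{N}^N,\ b_\alpha\in\mathbb{R}\}$ (homogeneous polynomials of degree $m$). $\mathcal{H}_m^K(\mathbb{R}^N)=\{u\in\mathbb{P}_m(\mathbb{R}^N):\ \mathcal{L}_K u(x)=0\text{ for all }x\in\mathbb{R}^N\}$, and $\mathcal{H}_m^1(\mathbb{R}^N)$ is the set of $u\in\mathbb{P}_m(\mathbb{R}^N)$ with $\Delta u=0$ in $\mathbb{R}^N$. *)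

theory Defs
  imports "HOL-Analysis.Analysis"
begin

definition hom_poly :: "nat \<Rightarrow> (real^'n \<Rightarrow> real) set" where
  "hom_poly m = {u. \<exists>b :: ('n \<Rightarrow> nat) \<Rightarrow> real.
      u = (\<lambda>x. \<Sum>\<alpha>\<in>{\<alpha>::'n \<Rightarrow> nat. sum \<alpha> UNIV = m}.
                 b \<alpha> * (\<Prod>i\<in>UNIV. (x $ i) ^ (\<alpha> i)))}"

definition LK_trunc :: "(real \<Rightarrow> real) \<Rightarrow> (real^'n \<Rightarrow> real) \<Rightarrow> real^'n \<Rightarrow> real \<Rightarrow> real" where
  "LK_trunc K u x \<epsilon> =
     integral (ball 0 (1/\<epsilon>) - ball 0 \<epsilon>) (\<lambda>z. (u x - u (x + z)) * K (norm z))"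

definition LK_zero_at :: "(real \<Rightarrow> real) \<Rightarrow> (real^'n \<Rightarrow> real) \<Rightarrow> real^'n \<Rightarrow> bool" where
  "LK_zero_at K u x \<longleftrightarrow> (LK_trunc K u x \<longlongrightarrow> 0) (at_right 0)"

definition HK :: "(real \<Rightarrow> real) \<Rightarrow> nat \<Rightarrow> (real^'n \<Rightarrow> real) set" where
  "HK K m = {u \<in> hom_poly m. \<forall>x. LK_zero_at K u x}"

definition laplacian :: "(real^'n \<Rightarrow> real) \<Rightarrow> real^'n \<Rightarrow> real" where
  "laplacian u x = (\<Sum>i\<in>UNIV. (deriv ^^ 2) (\<lambda>t. u (x + t *\<^sub>R axis i 1)) 0)"

definition H1 :: "nat \<Rightarrow> (real^'n \<Rightarrow> real) set" where
  "H1 m = {u \<in> hom_poly m. \<forall>x. laplacian u x = 0}"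

definition kappa :: "(real \<Rightarrow> real) \<Rightarrow> nat \<Rightarrow> nat \<Rightarrow> nat \<Rightarrow> real \<Rightarrow> real" where
  "kappa K N i j \<epsilon> =
     integral {\<epsilon>..1/\<epsilon>} (\<lambda>t. K t * t ^ (N - 1 + j)) /
     integral {\<epsilon>..1/\<epsilon>} (\<lambda>t. K t * t ^ (N - 1 + i))"

end

(*
  Write u (x + z) as the sum of its Taylor parts P_k (x, z), homogeneous of degree k in z and of
  degree m - k in x; the truncated operator is then minus the sum over k >= 1 of the integrals
  of P_k (x, z) K (|z|) over the annulus eps <= |z| < 1/eps. Invariance of a radial weight under
  coordinate reflections and rotations forces the moments of all monomials z^a of degree k to be
  proportional to the Gaussian moments, the products of the double factorials (a_i - 1)!!. Hence
  for P homogeneous of degree k the integral of P K equals, up to the factor A_k / (k A_(k-2)) of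
  ratios of moments, the integral of (Laplacian P) K, and these factors are positive for small eps
  as soon as K is positive somewhere. If u is harmonic every P_k has vanishing Laplacian, so all
  integrals vanish. Conversely, replacing x by s x shows that each integral tends to 0 on its own,
  and the one for k = 2 is a positive multiple of the Laplacian of u at x.
*)
theory Submission
  imports Defs
begin

section \<open>Invariance of Lebesgue measure under plane rotations\<close>

definition coord_shear :: "'n::finite \<Rightarrow> 'n \<Rightarrow> real \<Rightarrow> real^'n \<Rightarrow> real^'n" where
  "coord_shear i j c x = (\<chi> k. if k = i then x$i + c * x$j else x$k)"

lemma coord_shear_nth [simp]: "coord_shear i j c x $ k = (if k = i then x$i + c * x$j else x$k)"
  by (simp add: coord_shear_def)

lemma linear_coord_shear: "linear (coord_shear i j c)"
  by (rule linearI) (auto simp: vec_eq_iff algebra_simps)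

lemma measure_coord_shear_cbox:
  fixes a b :: "real^'n::finite"
  assumes "i \<noteq> j"
  shows "measure lebesgue (coord_shear i j 1 ` cbox a b) = measure lebesgue (cbox a b)"
proof (cases "cbox a b = {}")
  case False
  define w where "w = a$j *\<^sub>R axis j (1::real)"
  have shear_eq: "coord_shear i j 1 = (\<lambda>x. \<chi> k. if k = i then x$i + x$j else x$k)"
    by (simp add: coord_shear_def fun_eq_iff)
  have ne: "cbox (a - w) (b - w) \<noteq> {}"
    using False by (simp add: box_ne_empty inner_diff_left)
  have "cbox a b = (+) w ` cbox (a - w) (b - w)"
    using cbox_translation[of w "a - w" "b - w"] by simp
  then have "coord_shear i j 1 ` cbox a b = (+) (coord_shear i j 1 w) ` (coord_shear i j 1 ` cbox (a - w) (b - w))"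
    by (simp add: image_image linear_add[OF linear_coord_shear])
  then have "measure lebesgue (coord_shear i j 1 ` cbox a b)
      = measure lebesgue (coord_shear i j 1 ` cbox (a - w) (b - w))"
    by (simp add: measure_translation)
  also have "\<dots> = measure lebesgue (cbox (a - w) (b - w))"
    unfolding shear_eq using assms ne by (intro measure_shear_interval) (auto simp: w_def)
  also have "\<dots> = measure lebesgue (cbox a b)"
    by (simp add: \<open>cbox a b = (+) w ` cbox (a - w) (b - w)\<close> measure_translation)
  finally show ?thesis .
qed simp

lemma
  fixes S :: "(real^'n::finite) set"
  assumes "i \<noteq> j" "S \<in> lmeasurable"
  shows measurable_coord_shear: "coord_shear i j c ` S \<in> lmeasurable"
    and measure_coord_shear: "measure lebesgue (coord_shear i j c ` S) = measure lebesgue S"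
proof -
  have unit: "coord_shear i j 1 ` T \<in> lmeasurable
      \<and> measure lebesgue (coord_shear i j 1 ` T) = measure lebesgue T" if "T \<in> lmeasurable" for T
    using measure_linear_sufficient[OF linear_coord_shear[of i j 1] that, where m=1]
      measure_coord_shear_cbox[OF assms(1)] by (metis mult_1)
  have "coord_shear i j c ` S \<in> lmeasurable
      \<and> measure lebesgue (coord_shear i j c ` S) = measure lebesgue S"
  proof (cases "c = 0")
    case True
    then have "coord_shear i j c = id" by (simp add: coord_shear_def fun_eq_iff vec_eq_iff)
    then show ?thesis using assms by simp
  next
    case False
    text \<open>Conjugate the unit shear by the stretch of the \<open>j\<close>-th coordinate by \<open>c\<close>.\<close>
    define d where "d = (\<lambda>k. if k = j then c else 1)"
    define d' where "d' = (\<lambda>k. if k = j then 1/c else 1)"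
    let ?D = "\<lambda>x::real^'n. \<chi> k. d k * x$k"
    let ?D' = "\<lambda>x::real^'n. \<chi> k. d' k * x$k"
    have "coord_shear i j c x = ?D' (coord_shear i j 1 (?D x))" for x
      using assms(1) False by (auto simp: d_def d'_def vec_eq_iff)
    then have eq: "coord_shear i j c ` S = ?D' ` coord_shear i j 1 ` ?D ` S"
      by (simp add: image_image)
    have "prod d UNIV = c" "prod d' UNIV = 1/c"
      by (simp_all add: d_def d'_def prod.If_cases)
    then show ?thesis
      using unit[OF measurable_stretch[OF assms(2), of d]] measure_stretch[OF assms(2), of d]
        measurable_stretch[of "coord_shear i j 1 ` ?D ` S" d'] False
        measure_stretch[of "coord_shear i j 1 ` ?D ` S" d']
      by (simp add: eq abs_divide)
  qed
  then show "coord_shear i j c ` S \<in> lmeasurable"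
    "measure lebesgue (coord_shear i j c ` S) = measure lebesgue S" by auto
qed

lemma distr_lborel_eq_lborelI:
  fixes T T' :: "'a::euclidean_space \<Rightarrow> 'a"
  assumes "continuous_on UNIV T" and "\<And>x. T (T' x) = x" and "\<And>x. T' (T x) = x"
    and "\<And>S. S \<in> lmeasurable \<Longrightarrow> T' ` S \<in> lmeasurable"
    and "\<And>S. S \<in> lmeasurable \<Longrightarrow> measure lebesgue (T' ` S) = measure lebesgue S"
  shows "distr lborel borel T = lborel"
proof (rule lborel_eqI[symmetric])
  fix l u :: 'a
  assume le: "\<And>b. b \<in> Basis \<Longrightarrow> l \<bullet> b \<le> u \<bullet> b"
  have T_meas: "T \<in> borel_measurable borel"
    using assms(1) by (rule borel_measurable_continuous_onI)
  have preimage: "T -` box l u = T' ` box l u"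
    using assms(2,3) by (auto simp: image_iff) metis
  have "open (T -` box l u)"
    using assms(1) by (simp add: continuous_on_open_vimage open_box)
  then have "emeasure (distr lborel borel T) (box l u) = emeasure lebesgue (T' ` box l u)"
    by (simp add: emeasure_distr T_meas emeasure_completion borel_open preimage[symmetric])
  also have "\<dots> = emeasure lebesgue (box l u)"
    using assms(4,5)[of "box l u"] by (simp add: emeasure_eq_measure2)
  also have "\<dots> = (\<Prod>b\<in>Basis. (u - l) \<bullet> b)"
    using le by (simp add: emeasure_completion)
  finally show "emeasure (distr lborel borel T) (box l u) = (\<Prod>b\<in>Basis. (u - l) \<bullet> b)" .
qed simp

definition plane_rotation :: "'n::finite \<Rightarrow> 'n \<Rightarrow> real \<Rightarrow> real^'n \<Rightarrow> real^'n" where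
  "plane_rotation i j t z =
     (\<chi> k. if k = i then cos t * z$i - sin t * z$j
           else if k = j then sin t * z$i + cos t * z$j else z$k)"

lemma plane_rotation_nth:
  "plane_rotation i j t z $ k =
     (if k = i then cos t * z$i - sin t * z$j else if k = j then sin t * z$i + cos t * z$j else z$k)"
  by (simp add: plane_rotation_def)

lemma plane_rotation_0 [simp]: "plane_rotation i j 0 z = z"
  by (simp add: vec_eq_iff plane_rotation_nth)

lemma plane_rotation_minus_cancel:
  assumes "i \<noteq> j"
  shows "plane_rotation i j (- t) (plane_rotation i j t z) = z"
proof -
  have rot_sq: "cos t * (cos t * x) + sin t * (sin t * x) = x" for x :: real
  proof -
    have "cos t * (cos t * x) + sin t * (sin t * x) = (cos t * cos t + sin t * sin t) * x"
      by (simp only: distrib_right mult.assoc)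
    then show ?thesis by (simp only: sin_cos_squared_add3 mult_1_left)
  qed
  show ?thesis
    using assms by (simp add: vec_eq_iff plane_rotation_nth algebra_simps rot_sq)
qed

text \<open>The classical three-shear factorisation, with \<open>tan (t/2) = sin t / (1 + cos t)\<close>.\<close>
lemma plane_rotation_eq_shears:
  assumes "i \<noteq> j" and "cos t \<noteq> -1"
  shows "plane_rotation i j t
    = coord_shear i j (- sin t / (1 + cos t)) \<circ> coord_shear j i (sin t) \<circ> coord_shear i j (- sin t / (1 + cos t))"
proof -
  define a where "a = - sin t / (1 + cos t)"
  have c1: "1 + cos t \<noteq> 0" using assms(2) by linarith
  have sin2: "(sin t)^2 = (1 - cos t) * (1 + cos t)"
    by (simp add: sin_squared_eq algebra_simps power2_eq_square)
  have e1: "1 + a * sin t = cos t"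
  proof -
    have "a * sin t = - ((sin t)^2 / (1 + cos t))" by (simp add: a_def power2_eq_square)
    also have "\<dots> = - (1 - cos t)" using c1 by (simp add: sin2)
    finally show ?thesis by simp
  qed
  have a2: "a^2 = (1 - cos t) / (1 + cos t)"
  proof -
    have "a^2 = (sin t)^2 / (1 + cos t)^2"
      by (simp add: a_def power_divide)
    also have "\<dots> = (1 - cos t) * (1 + cos t) / ((1 + cos t) * (1 + cos t))"
      by (simp only: sin2) (simp add: power2_eq_square)
    also have "\<dots> = (1 - cos t) / (1 + cos t)" using c1 by simp
    finally show ?thesis .
  qed
  have e2: "2 * a + a^2 * sin t = - sin t"
  proof -
    have "2 * a = (- 2 * sin t) / (1 + cos t)" by (simp add: a_def)
    moreover have "a^2 * sin t = ((1 - cos t) * sin t) / (1 + cos t)" by (simp add: a2)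
    ultimately have "2 * a + a^2 * sin t = (- 2 * sin t + (1 - cos t) * sin t) / (1 + cos t)"
      by (simp add: add_divide_distrib diff_divide_distrib)
    also have "\<dots> = - sin t * (1 + cos t) / (1 + cos t)" by (simp add: algebra_simps)
    also have "\<dots> = - sin t" using c1 by simp
    finally show ?thesis .
  qed
  have "x$i + a * x$j + a * (x$j + sin t * (x$i + a * x$j))
      = (1 + a * sin t) * x$i + (2 * a + a^2 * sin t) * x$j" for x
    by (simp add: algebra_simps power2_eq_square)
  moreover have "x$j + sin t * (x$i + a * x$j) = sin t * x$i + (1 + a * sin t) * x$j" for x
    by (simp add: algebra_simps)
  ultimately show ?thesis
    using assms(1) unfolding e1 e2 a_def[symmetric]
    by (auto simp: fun_eq_iff vec_eq_iff plane_rotation_nth)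
qed

lemma norm_plane_rotation:
  assumes "i \<noteq> j"
  shows "norm (plane_rotation i j t z) = norm z"
proof -
  have split: "(\<Sum>k\<in>UNIV. f k) = f i + f j + (\<Sum>k\<in>UNIV-{i,j}. f k)" for f :: "'a \<Rightarrow> real"
  proof -
    have "(\<Sum>k\<in>UNIV. f k) = f i + (\<Sum>k\<in>UNIV-{i}. f k)" by (rule sum.remove) auto
    also have "(\<Sum>k\<in>UNIV-{i}. f k) = f j + (\<Sum>k\<in>UNIV-{i}-{j}. f k)"
      by (rule sum.remove) (use assms in auto)
    moreover have "UNIV-{i}-{j} = UNIV-{i,j}" by auto
    ultimately show ?thesis by simp
  qed
  have "(cos t * z$i - sin t * z$j) * (cos t * z$i - sin t * z$j)
      + (sin t * z$i + cos t * z$j) * (sin t * z$i + cos t * z$j)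
      = (cos t * cos t + sin t * sin t) * (z$i * z$i + z$j * z$j)"
    by algebra
  also have "\<dots> = z$i * z$i + z$j * z$j" by simp
  finally have "(cos t * z$i - sin t * z$j) * (cos t * z$i - sin t * z$j)
      + (sin t * z$i + cos t * z$j) * (sin t * z$i + cos t * z$j) = z$i * z$i + z$j * z$j" .
  then have "(\<Sum>k\<in>UNIV. plane_rotation i j t z $ k * plane_rotation i j t z $ k) = (\<Sum>k\<in>UNIV. z$k * z$k)"
    using assms by (subst (1 2) split) (simp add: plane_rotation_nth)
  then show ?thesis
    by (simp add: norm_eq_sqrt_inner inner_vec_def)
qed

lemma linear_plane_rotation: "linear (plane_rotation i j t)"
  by (rule linearI) (auto simp: vec_eq_iff plane_rotation_nth algebra_simps)

lemma continuous_on_plane_rotation: "continuous_on UNIV (plane_rotation i j t)"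
  by (simp add: linear_continuous_on linear_conv_bounded_linear[symmetric] linear_plane_rotation)

lemma distr_lborel_plane_rotation:
  assumes "i \<noteq> j" and "cos t \<noteq> -1"
  shows "distr lborel borel (plane_rotation i j t) = lborel"
proof (rule distr_lborel_eq_lborelI[where T' = "plane_rotation i j (- t)"])
  have "cos (- t) \<noteq> -1" using assms(2) by simp
  from plane_rotation_eq_shears[OF assms(1) this]
  have eq: "plane_rotation i j (- t) ` S
      = coord_shear i j (sin t / (1 + cos t)) ` coord_shear j i (- sin t) ` coord_shear i j (sin t / (1 + cos t)) ` S"
    for S by (simp add: image_comp)
  fix S :: "(real^'a) set" assume "S \<in> lmeasurable"
  then show "plane_rotation i j (- t) ` S \<in> lmeasurable"
    "measure lebesgue (plane_rotation i j (- t) ` S) = measure lebesgue S"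
    unfolding eq using assms(1) by (simp_all add: measurable_coord_shear measure_coord_shear)
next
  show "plane_rotation i j t (plane_rotation i j (- t) x) = x" for x
    using plane_rotation_minus_cancel[OF assms(1), of "- t"] by simp
qed (use assms(1) in \<open>simp_all add: continuous_on_plane_rotation plane_rotation_minus_cancel\<close>)

definition coord_reflection :: "'n::finite \<Rightarrow> real^'n \<Rightarrow> real^'n" where
  "coord_reflection i z = (\<chi> k. if k = i then - z$k else z$k)"

lemma norm_coord_reflection: "norm (coord_reflection i z) = norm z"
proof -
  have "(\<Sum>k\<in>UNIV. coord_reflection i z $ k * coord_reflection i z $ k) = (\<Sum>k\<in>UNIV. z$k * z$k)"
    by (rule sum.cong) (auto simp: coord_reflection_def)
  then show ?thesis by (simp add: norm_eq_sqrt_inner inner_vec_def)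
qed

lemma linear_coord_reflection: "linear (coord_reflection i)"
  by (rule linearI) (auto simp: vec_eq_iff coord_reflection_def)

lemma continuous_on_coord_reflection: "continuous_on UNIV (coord_reflection i)"
  by (simp add: linear_continuous_on linear_conv_bounded_linear[symmetric] linear_coord_reflection)

lemma distr_lborel_coord_reflection: "distr lborel borel (coord_reflection i) = lborel"
proof (rule distr_lborel_eq_lborelI[where T' = "coord_reflection i"])
  define d where "d = (\<lambda>k. if k = i then -1 else (1::real))"
  have eq: "coord_reflection i = (\<lambda>x. \<chi> k. d k * x$k)"
    by (auto simp: coord_reflection_def d_def fun_eq_iff vec_eq_iff)
  have "\<bar>prod d UNIV\<bar> = 1" by (simp add: d_def prod.If_cases)
  then show "coord_reflection i ` S \<in> lmeasurable"
    "measure lebesgue (coord_reflection i ` S) = measure lebesgue S" if "S \<in> lmeasurable" for S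
    unfolding eq using measurable_stretch[OF that] measure_stretch[OF that] by simp_all
  show "continuous_on UNIV (coord_reflection i)"
    by (rule continuous_on_coord_reflection)
qed (simp_all add: coord_reflection_def vec_eq_iff)

section \<open>Radial integrals over annuli\<close>

definition annulus :: "real \<Rightarrow> 'a::real_normed_vector set" where
  "annulus e = ball 0 (1/e) - ball 0 e"

lemma mem_annulus: "z \<in> annulus e \<longleftrightarrow> e \<le> norm z \<and> norm z < 1/e"
  by (auto simp: annulus_def dist_norm)

lemma annulus_in_sets_lborel [measurable]: "annulus e \<in> sets lborel"
  unfolding annulus_def by (intro sets.Diff borel_open) auto

text \<open>On the annulus \<open>K (norm z)\<close> agrees with \<open>K (max (norm z) e)\<close>, which is continuous everywhere.\<close>
lemma
  fixes q :: "'a::euclidean_space \<Rightarrow> real"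
  assumes K: "continuous_on {0<..} K" and e: "e > 0" and q: "continuous_on UNIV q"
  shows integrable_lborel_annulus:
      "integrable lborel (\<lambda>z. indicator (annulus e) z * (q z * K (max (norm z) e)))"
    and integrable_on_annulus: "(\<lambda>z. q z * K (norm z)) integrable_on annulus e"
    and integral_annulus_eq_lborel: "integral (annulus e) (\<lambda>z. q z * K (norm z))
          = (LINT z|lborel. indicator (annulus e) z * (q z * K (max (norm z) e)))"
proof -
  define g where "g = (\<lambda>z. q z * K (max (norm z) e))"
  have "continuous_on UNIV (\<lambda>z::'a. K (max (norm z) e))"
    by (rule continuous_on_compose2[OF K]) (use e in \<open>auto intro!: continuous_intros\<close>)
  then have "continuous_on UNIV g"
    unfolding g_def by (intro continuous_intros q)
  then have "integrable lborel (\<lambda>z. indicator (cball (0::'a) (1/e)) z *\<^sub>R g z)"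
    by (intro borel_integrable_compact) (auto intro: continuous_on_subset)
  from integrable_mult_indicator[OF annulus_in_sets_lborel[of e] this]
  have "integrable lborel (\<lambda>z. indicator (annulus e) z *\<^sub>R (indicator (cball (0::'a) (1/e)) z *\<^sub>R g z))" .
  moreover have "(\<lambda>z. indicator (annulus e) z *\<^sub>R (indicator (cball (0::'a) (1/e)) z *\<^sub>R g z))
      = (\<lambda>z. indicator (annulus e) z * (q z * K (max (norm z) e)))"
    by (auto simp: annulus_def g_def fun_eq_iff indicator_def)
  ultimately show int: "integrable lborel (\<lambda>z. indicator (annulus e) z * (q z * K (max (norm z) e)))"
    by simp
  have "((\<lambda>z. indicator (annulus e) z * (q z * K (max (norm z) e))) has_integral
        (LINT z|lborel. indicator (annulus e) z * (q z * K (max (norm z) e)))) UNIV"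
    by (rule has_integral_integral_lborel[OF int])
  moreover have "(\<lambda>z. indicator (annulus e) z * (q z * K (max (norm z) e)))
      = (\<lambda>z. if z \<in> annulus e then g z else 0)"
    by (auto simp: fun_eq_iff g_def)
  ultimately have "(g has_integral (LINT z|lborel. indicator (annulus e) z * (q z * K (max (norm z) e)))) (annulus e)"
    by (simp add: has_integral_restrict_UNIV)
  moreover have "\<And>z. z \<in> annulus e \<Longrightarrow> q z * K (norm z) = g z"
    by (auto simp: g_def mem_annulus max_def)
  ultimately have "((\<lambda>z. q z * K (norm z)) has_integral
      (LINT z|lborel. indicator (annulus e) z * (q z * K (max (norm z) e)))) (annulus e)"
    by (subst has_integral_cong) auto
  then show "(\<lambda>z. q z * K (norm z)) integrable_on annulus e"
    and "integral (annulus e) (\<lambda>z. q z * K (norm z))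
          = (LINT z|lborel. indicator (annulus e) z * (q z * K (max (norm z) e)))"
    by (auto intro: integral_unique)
qed

lemma integral_annulus_transform:
  fixes q :: "'a::euclidean_space \<Rightarrow> real"
  assumes K: "continuous_on {0<..} K" and e: "e > 0" and q: "continuous_on UNIV q"
    and T: "distr lborel borel T = lborel" "continuous_on UNIV T" "\<And>z. norm (T z) = norm z"
  shows "integral (annulus e) (\<lambda>z. q (T z) * K (norm z)) = integral (annulus e) (\<lambda>z. q z * K (norm z))"
proof -
  define F where "F = (\<lambda>z. indicator (annulus e) z * (q z * K (max (norm z) e)))"
  have T_meas: "T \<in> measurable lborel borel"
    using borel_measurable_continuous_onI[OF T(2)] by simp
  have F_meas: "F \<in> borel_measurable borel"
    using borel_measurable_integrable[OF integrable_lborel_annulus[OF K e q]] unfolding F_def by simp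
  have "continuous_on UNIV (\<lambda>z. q (T z))"
    by (rule continuous_on_compose2[OF q T(2)]) auto
  then have "integral (annulus e) (\<lambda>z. q (T z) * K (norm z))
      = (LINT z|lborel. indicator (annulus e) z * (q (T z) * K (max (norm z) e)))"
    by (rule integral_annulus_eq_lborel[OF K e])
  also have "\<dots> = (LINT z|lborel. F (T z))"
    by (simp add: F_def T(3) indicator_def mem_annulus)
  also have "\<dots> = (LINT z|distr lborel borel T. F z)"
    by (rule integral_distr[symmetric, OF T_meas F_meas])
  also have "\<dots> = integral (annulus e) (\<lambda>z. q z * K (norm z))"
    unfolding T(1) F_def by (rule integral_annulus_eq_lborel[OF K e q, symmetric])
  finally show ?thesis .
qed

lemma tendsto_difference_quotient_inverse_Suc:
  assumes "(f has_real_derivative D) (at 0)"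
  shows "(\<lambda>k. (f (1 / real (Suc k)) - f 0) / (1 / real (Suc k))) \<longlonglongrightarrow> D"
proof -
  have "((\<lambda>t. (f (0 + t) - f 0) / t) \<longlongrightarrow> D) (at 0)"
    using assms by (simp add: DERIV_def)
  moreover have "filterlim (\<lambda>k. 1 / real (Suc k)) (at 0) sequentially"
  proof (rule filterlim_atI)
    show "(\<lambda>k. 1 / real (Suc k)) \<longlonglongrightarrow> 0" by (rule LIMSEQ_Suc[OF lim_inverse_n'])
  qed simp
  ultimately show ?thesis
    using filterlim_compose by fastforce
qed

text \<open>Differentiation under the integral sign, by dominated convergence of difference quotients.\<close>
lemma integral_annulus_derivative_eq_0:
  fixes \<phi> \<phi>' :: "real \<Rightarrow> 'a::euclidean_space \<Rightarrow> real"
  assumes K: "continuous_on {0<..} K" and K_nonneg: "\<And>t. t > 0 \<Longrightarrow> K t \<ge> 0" and e: "e > 0"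
    and \<phi>_cont: "\<And>t. continuous_on UNIV (\<phi> t)"
    and \<phi>'_cont: "continuous_on UNIV (\<lambda>p. \<phi>' (fst p) (snd p))"
    and deriv: "\<And>t z. ((\<lambda>t. \<phi> t z) has_real_derivative \<phi>' t z) (at t)"
    and const: "\<And>t. 0 < t \<Longrightarrow> t \<le> 1 \<Longrightarrow>
      integral (annulus e) (\<lambda>z. \<phi> t z * K (norm z)) = integral (annulus e) (\<lambda>z. \<phi> 0 z * K (norm z))"
  shows "integral (annulus e) (\<lambda>z. \<phi>' 0 z * K (norm z)) = 0"
proof -
  obtain B where B: "\<And>t z. t \<in> {0..1} \<Longrightarrow> z \<in> cball 0 (1/e) \<Longrightarrow> \<bar>\<phi>' t z\<bar> \<le> B"
  proof -
    have "compact ((\<lambda>p. \<phi>' (fst p) (snd p)) ` ({0..1} \<times> cball 0 (1/e)))"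
      by (intro compact_continuous_image compact_Times compact_Icc compact_cball
          continuous_on_subset[OF \<phi>'_cont]) auto
    then obtain B where "\<forall>y \<in> (\<lambda>p. \<phi>' (fst p) (snd p)) ` ({0..1} \<times> cball 0 (1/e)). norm y \<le> B"
      using compact_imp_bounded bounded_iff by metis
    then show ?thesis using that by force
  qed
  define h where "h k = 1 / real (Suc k)" for k
  have h: "0 < h k" "h k \<le> 1" for k by (auto simp: h_def)
  define f where "f k z = (\<phi> (h k) z - \<phi> 0 z) / h k * K (norm z)" for k z
  have int_\<phi>: "(\<lambda>z. \<phi> t z * K (norm z)) integrable_on annulus e" for t
    by (rule integrable_on_annulus[OF K e \<phi>_cont])
  have f_eq: "f k = (\<lambda>z. (1 / h k) * (\<phi> (h k) z * K (norm z) - \<phi> 0 z * K (norm z)))" for k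
    using h(1)[of k] by (auto simp: f_def fun_eq_iff field_simps)
  have int_f: "f k integrable_on annulus e" for k
    unfolding f_eq by (intro integrable_on_mult_right integrable_diff int_\<phi>)
  have integral_f: "integral (annulus e) (f k) = 0" for k
    unfolding f_eq using const[OF h] by (simp add: integral_diff int_\<phi>)
  have int_bound: "(\<lambda>z. B * K (norm z)) integrable_on annulus e"
    using integrable_on_annulus[OF K e continuous_on_const[of UNIV B]] .
  have bound: "norm (f k z) \<le> B * K (norm z)" if z: "z \<in> annulus e" for k z
  proof -
    have K_z: "K (norm z) \<ge> 0" using z e by (intro K_nonneg) (auto simp: mem_annulus)
    obtain \<xi> where \<xi>: "0 < \<xi>" "\<xi> < h k" "\<phi> (h k) z - \<phi> 0 z = (h k - 0) * \<phi>' \<xi> z"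
      using MVT2[OF h(1)[of k], of "\<lambda>t. \<phi> t z" "\<lambda>t. \<phi>' t z"] deriv by blast
    have "\<bar>\<phi>' \<xi> z\<bar> \<le> B" using \<xi> h[of k] z by (intro B) (auto simp: annulus_def)
    then have "\<bar>(\<phi> (h k) z - \<phi> 0 z) / h k\<bar> \<le> B"
      using \<xi>(3) h[of k] by (simp add: abs_mult)
    then have "\<bar>(\<phi> (h k) z - \<phi> 0 z) / h k\<bar> * K (norm z) \<le> B * K (norm z)"
      by (rule mult_right_mono[OF _ K_z])
    moreover have "norm (f k z) = \<bar>(\<phi> (h k) z - \<phi> 0 z) / h k\<bar> * K (norm z)"
      using K_z unfolding f_def real_norm_def abs_mult by simp
    ultimately show ?thesis by simp
  qed
  have lim: "(\<lambda>k. f k z) \<longlonglongrightarrow> \<phi>' 0 z * K (norm z)" for z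
    using tendsto_difference_quotient_inverse_Suc[OF deriv[of z 0]]
    unfolding f_def h_def by (intro tendsto_intros)
  have "(\<lambda>k. integral (annulus e) (f k)) \<longlonglongrightarrow> integral (annulus e) (\<lambda>z. \<phi>' 0 z * K (norm z))"
    by (rule dominated_convergence(2)[OF int_f int_bound bound lim])
  then have "(\<lambda>k. 0) \<longlonglongrightarrow> integral (annulus e) (\<lambda>z. \<phi>' 0 z * K (norm z))"
    by (simp add: integral_f)
  then show ?thesis
    using LIMSEQ_unique[OF tendsto_const] by metis
qed

section \<open>Moments of a radial weight\<close>

definition monomial :: "('n::finite \<Rightarrow> nat) \<Rightarrow> real^'n \<Rightarrow> real" where
  "monomial a z = (\<Prod>i\<in>UNIV. z$i ^ a i)"

definition moment :: "(real \<Rightarrow> real) \<Rightarrow> real \<Rightarrow> ('n::finite \<Rightarrow> nat) \<Rightarrow> real" where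
  "moment K e a = integral (annulus e) (\<lambda>z. monomial a z * K (norm z))"

lemma continuous_on_monomial: "continuous_on UNIV (monomial a)"
  unfolding monomial_def by (intro continuous_intros)

lemma monomial_remove: "monomial a z = z$i ^ a i * (\<Prod>k\<in>UNIV-{i}. z$k ^ a k)"
  unfolding monomial_def by (rule prod.remove) auto

lemma monomial_remove2:
  assumes "i \<noteq> j"
  shows "monomial a z = z$i ^ a i * z$j ^ a j * (\<Prod>k\<in>UNIV-{i,j}. z$k ^ a k)"
proof -
  have "(\<Prod>k\<in>UNIV-{i}. z$k ^ a k) = z$j ^ a j * (\<Prod>k\<in>UNIV-{i}-{j}. z$k ^ a k)"
    by (rule prod.remove) (use assms in auto)
  moreover have "UNIV-{i}-{j} = UNIV-{i,j}" by auto
  ultimately show ?thesis by (simp add: monomial_remove[of _ _ i] mult.assoc)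
qed

lemma monomial_single: "monomial ((\<lambda>_. 0)(i := k)) z = z$i ^ k"
  by (simp add: monomial_remove[of _ _ i])

lemma monomial_scaleR: "monomial a (t *\<^sub>R z) = t ^ sum a UNIV * monomial a z"
  by (simp add: monomial_def power_mult_distrib prod.distrib power_sum)

lemma moment_eq_0_if_odd:
  assumes K: "continuous_on {0<..} K" and e: "e > 0" and odd: "odd (a i)"
  shows "moment K e a = 0"
proof -
  have "monomial a (coord_reflection i z) = - monomial a z" for z
  proof -
    have "(\<Prod>k\<in>UNIV-{i}. coord_reflection i z $ k ^ a k) = (\<Prod>k\<in>UNIV-{i}. z$k ^ a k)"
      by (rule prod.cong) (auto simp: coord_reflection_def)
    then show ?thesis
      using odd by (simp add: monomial_remove[of _ _ i] coord_reflection_def power_minus_odd)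
  qed
  moreover have "moment K e a = integral (annulus e) (\<lambda>z. monomial a (coord_reflection i z) * K (norm z))"
    unfolding moment_def
    by (rule integral_annulus_transform[symmetric, OF K e continuous_on_monomial
          distr_lborel_coord_reflection]) (simp_all add: continuous_on_coord_reflection norm_coord_reflection)
  ultimately have "moment K e a = - moment K e a"
    by (simp add: moment_def integral_neg)
  then show ?thesis by simp
qed

text \<open>Differentiate the rotation invariance of the moment of \<open>z\<^sub>i z\<^sub>j \<cdot> monomial g\<close> at angle \<open>0\<close>.\<close>
lemma moment_rotation_identity:
  assumes K: "continuous_on {0<..} K" and K_nonneg: "\<And>t. t > 0 \<Longrightarrow> K t \<ge> 0" and e: "e > 0"
    and ij: "i \<noteq> j"
  shows "real (g j + 1) * moment K e (g(i := g i + 2)) = real (g i + 1) * moment K e (g(j := g j + 2))"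
proof -
  define b where "b = g(i := g i + 1, j := g j + 1)"
  define p where "p = g i + 1"
  define q where "q = g j + 1"
  define R where "R z = (\<Prod>k\<in>UNIV-{i,j}. z$k ^ g k)" for z :: "real^'a"
  define \<phi> where "\<phi> t z = (cos t * z$i - sin t * z$j)^p * (sin t * z$i + cos t * z$j)^q * R z" for t z
  define \<phi>' where "\<phi>' t z =
     (real p * (cos t * z$i - sin t * z$j)^(p-1) * (- sin t * z$i - cos t * z$j) * (sin t * z$i + cos t * z$j)^q
      + (cos t * z$i - sin t * z$j)^p * (real q * (sin t * z$i + cos t * z$j)^(q-1) * (cos t * z$i - sin t * z$j)))
     * R z" for t z
  have \<phi>_rotation: "\<phi> t z = monomial b (plane_rotation i j t z)" for t z
  proof -
    have "(\<Prod>k\<in>UNIV-{i,j}. plane_rotation i j t z $ k ^ b k) = R z"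
      unfolding R_def by (rule prod.cong) (auto simp: b_def plane_rotation_nth)
    then show ?thesis
      using ij by (simp add: monomial_remove2[OF ij] b_def p_def q_def plane_rotation_nth \<phi>_def)
  qed
  have \<phi>'_0: "\<phi>' 0 z = real q * monomial (g(i := g i + 2)) z - real p * monomial (g(j := g j + 2)) z" for z
    using ij by (simp add: \<phi>'_def monomial_remove2[OF ij] R_def p_def q_def power_add power2_eq_square algebra_simps)
  have "integral (annulus e) (\<lambda>z. \<phi>' 0 z * K (norm z)) = 0"
  proof (rule integral_annulus_derivative_eq_0[OF K K_nonneg e])
    show "continuous_on UNIV (\<phi> t)" for t
      unfolding \<phi>_def R_def by (intro continuous_intros)
    show "continuous_on UNIV (\<lambda>p. \<phi>' (fst p) (snd p))"
      unfolding \<phi>'_def R_def by (intro continuous_intros)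
    show "((\<lambda>t. \<phi> t z) has_real_derivative \<phi>' t z) (at t)" for t z
      unfolding \<phi>_def \<phi>'_def by (auto intro!: derivative_eq_intros simp: algebra_simps)
    show "integral (annulus e) (\<lambda>z. \<phi> t z * K (norm z)) = integral (annulus e) (\<lambda>z. \<phi> 0 z * K (norm z))"
      if "0 < t" "t \<le> 1" for t
    proof -
      have "cos t > 0" using that pi_gt3 by (intro cos_gt_zero) auto
      then have "cos t \<noteq> -1" by linarith
      then show ?thesis
        unfolding \<phi>_rotation plane_rotation_0
        by (intro integral_annulus_transform[OF K e continuous_on_monomial
              distr_lborel_plane_rotation[OF ij]]) (simp_all add: continuous_on_plane_rotation norm_plane_rotation[OF ij])
    qed
  qed
  moreover have "integral (annulus e) (\<lambda>z. \<phi>' 0 z * K (norm z))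
      = real q * moment K e (g(i := g i + 2)) - real p * moment K e (g(j := g j + 2))"
    unfolding \<phi>'_0 moment_def left_diff_distrib mult.assoc
    by (simp add: integral_diff integrable_on_mult_right integrable_on_annulus[OF K e continuous_on_monomial])
  ultimately show ?thesis by (simp add: p_def q_def)
qed

text \<open>The moments of the standard normal distribution: \<open>(n - 1)!!\<close> for even \<open>n\<close>, \<open>0\<close> for odd \<open>n\<close>.\<close>
fun gaussian_moment :: "nat \<Rightarrow> real" where
  "gaussian_moment 0 = 1"
| "gaussian_moment (Suc 0) = 0"
| "gaussian_moment (Suc (Suc n)) = (real n + 1) * gaussian_moment n"

lemma gaussian_moment_odd: "odd n \<Longrightarrow> gaussian_moment n = 0"
  by (induction n rule: gaussian_moment.induct) auto

lemma gaussian_moment_even_pos: "even n \<Longrightarrow> gaussian_moment n > 0"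
  by (induction n rule: gaussian_moment.induct) auto

lemma gaussian_moment_2 [simp]: "gaussian_moment 2 = 1"
  by (simp add: numeral_2_eq_2)

definition gaussian_monomial_moment :: "('n::finite \<Rightarrow> nat) \<Rightarrow> real" where
  "gaussian_monomial_moment a = (\<Prod>i\<in>UNIV. gaussian_moment (a i))"

lemma gaussian_monomial_moment_remove:
  "gaussian_monomial_moment a = gaussian_moment (a i) * (\<Prod>k\<in>UNIV-{i}. gaussian_moment (a k))"
  unfolding gaussian_monomial_moment_def by (rule prod.remove) auto

lemma gaussian_monomial_moment_odd: "odd (a i) \<Longrightarrow> gaussian_monomial_moment a = 0"
  by (simp add: gaussian_monomial_moment_remove[of _ i] gaussian_moment_odd)

lemma gaussian_monomial_moment_single: "gaussian_monomial_moment ((\<lambda>_. 0)(i := k)) = gaussian_moment k"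
  by (simp add: gaussian_monomial_moment_remove[of _ i])

lemma gaussian_monomial_moment_add2:
  "gaussian_monomial_moment (g(i := g i + 2)) = (real (g i) + 1) * gaussian_monomial_moment g"
proof -
  have "(\<Prod>k\<in>UNIV-{i}. gaussian_moment ((g(i := g i + 2)) k)) = (\<Prod>k\<in>UNIV-{i}. gaussian_moment (g k))"
    by (rule prod.cong) auto
  then show ?thesis
    by (simp add: gaussian_monomial_moment_remove[of _ i] numeral_2_eq_2 del: fun_upd_apply)
       (simp add: mult.assoc)
qed

lemma gaussian_monomial_moment_diff2:
  "real (a i) * gaussian_monomial_moment a
     = real (a i) * (real (a i) - 1) * gaussian_monomial_moment (a(i := a i - 2))"
proof (cases "a i \<ge> 2")
  case True
  then have "a = (a(i := a i - 2))(i := (a(i := a i - 2)) i + 2)"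
    by (auto simp: fun_eq_iff)
  then have "gaussian_monomial_moment a = (real (a i - 2) + 1) * gaussian_monomial_moment (a(i := a i - 2))"
    by (metis gaussian_monomial_moment_add2 fun_upd_same)
  then show ?thesis using True by (simp add: of_nat_diff)
next
  case False
  then consider "a i = 0" | "a i = 1" by linarith
  then show ?thesis
    by cases (simp_all add: gaussian_monomial_moment_odd[of a i])
qed

lemma sum_fun_upd_UNIV:
  fixes g :: "'a::finite \<Rightarrow> nat"
  shows "sum (g(i := v)) UNIV = sum g UNIV - g i + v"
proof -
  have "sum (g(i := v)) UNIV = v + sum g (UNIV - {i})"
    by (simp add: sum.remove[of UNIV i])
  moreover have "sum g UNIV = g i + sum g (UNIV - {i})"
    by (simp add: sum.remove[of UNIV i])
  ultimately show ?thesis by presburger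
qed

text \<open>All moments of a fixed degree \<open>k\<close> are proportional to the Gaussian ones; the rotation
  identity moves exponent \<open>2\<close> at a time into the coordinate \<open>i\<close>.\<close>
lemma moment_eq_gaussian:
  fixes a :: "'n::finite \<Rightarrow> nat" and i :: 'n
  assumes K: "continuous_on {0<..} K" and K_nonneg: "\<And>t. t > 0 \<Longrightarrow> K t \<ge> 0" and e: "e > 0"
    and deg: "sum a UNIV = k"
  shows "moment K e a * gaussian_moment k = moment K e ((\<lambda>_. 0)(i := k)) * gaussian_monomial_moment a"
  using deg
proof (induction "k - a i" arbitrary: a rule: less_induct)
  case less
  show ?case
  proof (cases "\<forall>j. j \<noteq> i \<longrightarrow> a j = 0")
    case True
    then have "sum a UNIV = a i"
      by (simp add: sum.remove[of UNIV i] sum.neutral)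
    then have "a = (\<lambda>_. 0)(i := k)" using True less.prems by (auto simp: fun_eq_iff)
    then show ?thesis by (simp add: gaussian_monomial_moment_single)
  next
    case False
    then obtain j where j: "j \<noteq> i" "a j \<noteq> 0" by auto
    show ?thesis
    proof (cases "odd (a j)")
      case True
      then show ?thesis
        by (simp add: moment_eq_0_if_odd[OF K e, of a j] gaussian_monomial_moment_odd[of a j])
    next
      case False
      with j have "a j \<ge> 2" by presburger
      define g where "g = a(j := a j - 2)"
      define a' where "a' = g(i := g i + 2)"
      have a_eq: "a = g(j := g j + 2)" using \<open>a j \<ge> 2\<close> by (auto simp: g_def fun_eq_iff)
      have g_i: "g i = a i" using j(1) by (simp add: g_def)
      have "a i + a j \<le> sum a UNIV"
        using j(1) sum.remove[of UNIV i a] member_le_sum[of j "UNIV - {i}" a] by simp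
      then have sum_g: "sum g UNIV = k - 2"
        using less.prems \<open>a j \<ge> 2\<close> sum_fun_upd_UNIV[of a j "a j - 2"] by (simp add: g_def)
      have deg': "sum a' UNIV = k"
        using sum_g sum_fun_upd_UNIV[of g i "g i + 2"] \<open>a i + a j \<le> sum a UNIV\<close> less.prems \<open>a j \<ge> 2\<close>
        by (simp add: a'_def g_i)
      have lt: "k - a' i < k - a i"
        using \<open>a i + a j \<le> sum a UNIV\<close> less.prems \<open>a j \<ge> 2\<close> by (simp add: a'_def g_i)
      have "real (g i + 1) * (moment K e a * gaussian_moment k)
          = real (g j + 1) * (moment K e a' * gaussian_moment k)"
        using moment_rotation_identity[OF K K_nonneg e j(1)[symmetric], of g] by (simp add: a'_def a_eq)
      also have "\<dots> = real (g j + 1) * (moment K e ((\<lambda>_. 0)(i := k)) * gaussian_monomial_moment a')"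
        by (simp add: less.hyps[OF lt deg'])
      also have "\<dots> = real (g i + 1) * (moment K e ((\<lambda>_. 0)(i := k)) * gaussian_monomial_moment a)"
        using gaussian_monomial_moment_add2[of g i] gaussian_monomial_moment_add2[of g j]
        by (simp only: a'_def a_eq) (simp add: algebra_simps)
      finally show ?thesis by simp
    qed
  qed
qed

section \<open>Polynomials and their Laplacian\<close>

definition monomial_sum :: "'j set \<Rightarrow> ('j \<Rightarrow> real) \<Rightarrow> ('j \<Rightarrow> 'n::finite \<Rightarrow> nat) \<Rightarrow> real^'n \<Rightarrow> real" where
  "monomial_sum J c ex z = (\<Sum>j\<in>J. c j * monomial (ex j) z)"

lemma continuous_on_monomial_sum: "continuous_on UNIV (monomial_sum J c ex)"
  unfolding monomial_sum_def monomial_def by (intro continuous_intros)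

lemma integral_monomial_sum:
  assumes K: "continuous_on {0<..} K" and e: "e > 0" and J: "finite J"
  shows "integral (annulus e) (\<lambda>z. monomial_sum J c ex z * K (norm z)) = (\<Sum>j\<in>J. c j * moment K e (ex j))"
proof -
  have "integral (annulus e) (\<lambda>z. monomial_sum J c ex z * K (norm z))
      = integral (annulus e) (\<lambda>z. \<Sum>j\<in>J. c j * (monomial (ex j) z * K (norm z)))"
    by (simp add: monomial_sum_def sum_distrib_right mult.assoc)
  also have "\<dots> = (\<Sum>j\<in>J. c j * moment K e (ex j))"
    by (subst integral_sum[OF J])
       (simp_all add: moment_def integrable_on_mult_right integrable_on_annulus[OF K e continuous_on_monomial])
  finally show ?thesis .
qed

lemma monomial_sum_scaleR:
  assumes "\<And>j. j \<in> J \<Longrightarrow> sum (ex j) UNIV = k"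
  shows "monomial_sum J c ex (t *\<^sub>R z) = t ^ k * monomial_sum J c ex z"
  unfolding monomial_sum_def monomial_scaleR sum_distrib_left using assms by (intro sum.cong) auto

definition laplacian_coeff :: "('j \<Rightarrow> real) \<Rightarrow> ('j \<Rightarrow> 'n::finite \<Rightarrow> nat) \<Rightarrow> 'j \<times> 'n \<Rightarrow> real" where
  "laplacian_coeff c ex p = c (fst p) * (real (ex (fst p) (snd p)) * (real (ex (fst p) (snd p)) - 1))"

definition laplacian_exp :: "('j \<Rightarrow> 'n::finite \<Rightarrow> nat) \<Rightarrow> 'j \<times> 'n \<Rightarrow> 'n \<Rightarrow> nat" where
  "laplacian_exp ex p = (ex (fst p))(snd p := ex (fst p) (snd p) - 2)"

lemma second_derivative_monomial_sum:
  "(deriv ^^ 2) (\<lambda>t. monomial_sum J c ex (z + t *\<^sub>R axis i 1)) 0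
     = (\<Sum>j\<in>J. c j * (real (ex j i) * (real (ex j i) - 1)) * monomial ((ex j)(i := ex j i - 2)) z)"
proof -
  define R where "R j = (\<Prod>k\<in>UNIV-{i}. z$k ^ ex j k)" for j
  define F where "F t = (\<Sum>j\<in>J. c j * ((z$i + t) ^ ex j i * R j))" for t
  define F1 where "F1 t = (\<Sum>j\<in>J. c j * (real (ex j i) * (z$i + t) ^ (ex j i - 1) * R j))" for t
  define F2 where
    "F2 t = (\<Sum>j\<in>J. c j * (real (ex j i) * (real (ex j i - 1) * (z$i + t) ^ (ex j i - 1 - 1)) * R j))" for t
  have monomial_shift: "monomial a (z + t *\<^sub>R axis i 1) = (z$i + t) ^ a i * (\<Prod>k\<in>UNIV-{i}. z$k ^ a k)" for a t
  proof -
    have "(\<Prod>k\<in>UNIV-{i}. (z + t *\<^sub>R axis i 1)$k ^ a k) = (\<Prod>k\<in>UNIV-{i}. z$k ^ a k)"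
      by (rule prod.cong) (auto simp: axis_def)
    then show ?thesis by (simp add: monomial_remove[of _ _ i] axis_def)
  qed
  have "(\<lambda>t. monomial_sum J c ex (z + t *\<^sub>R axis i 1)) = F"
    by (simp add: F_def monomial_sum_def monomial_shift R_def fun_eq_iff)
  moreover have "deriv F = F1"
    unfolding F_def F1_def
    by (auto intro!: DERIV_imp_deriv derivative_eq_intros sum.cong simp: fun_eq_iff ac_simps)
  moreover have "deriv F1 0 = F2 0"
    unfolding F1_def F2_def
    by (auto intro!: DERIV_imp_deriv derivative_eq_intros sum.cong simp: ac_simps)
  moreover have "F2 0 = (\<Sum>j\<in>J. c j * (real (ex j i) * (real (ex j i) - 1)) * monomial ((ex j)(i := ex j i - 2)) z)"
    unfolding F2_def
  proof (rule sum.cong[OF refl])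
    fix j
    have "monomial ((ex j)(i := ex j i - 2)) z = z$i ^ (ex j i - 2) * R j"
      unfolding R_def monomial_remove[of _ _ i] by (auto intro!: prod.cong)
    moreover have "real (ex j i) * real (ex j i - 1) = real (ex j i) * (real (ex j i) - 1)"
      by (cases "ex j i") auto
    ultimately show "c j * (real (ex j i) * (real (ex j i - 1) * (z$i + 0) ^ (ex j i - 1 - 1)) * R j)
        = c j * (real (ex j i) * (real (ex j i) - 1)) * monomial ((ex j)(i := ex j i - 2)) z"
      by (simp add: numeral_2_eq_2 diff_diff_left mult.assoc[symmetric])
  qed
  ultimately show ?thesis by (simp add: numeral_2_eq_2)
qed

lemma laplacian_monomial_sum:
  "laplacian (monomial_sum J c ex) z = monomial_sum (J \<times> UNIV) (laplacian_coeff c ex) (laplacian_exp ex) z"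
proof -
  have "laplacian (monomial_sum J c ex) z
      = (\<Sum>i\<in>UNIV. \<Sum>j\<in>J. c j * (real (ex j i) * (real (ex j i) - 1)) * monomial ((ex j)(i := ex j i - 2)) z)"
    unfolding laplacian_def second_derivative_monomial_sum ..
  also have "\<dots> = (\<Sum>j\<in>J. \<Sum>i\<in>UNIV. c j * (real (ex j i) * (real (ex j i) - 1)) * monomial ((ex j)(i := ex j i - 2)) z)"
    by (rule sum.swap)
  also have "\<dots> = monomial_sum (J \<times> UNIV) (laplacian_coeff c ex) (laplacian_exp ex) z"
    unfolding monomial_sum_def sum.cartesian_product laplacian_coeff_def laplacian_exp_def
    by (rule sum.cong) (auto simp: split_beta)
  finally show ?thesis .
qed

lemma laplacian_monomial_sum_scaleR:
  fixes ex :: "'j \<Rightarrow> 'n::finite \<Rightarrow> nat"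
  assumes deg: "\<And>j. j \<in> J \<Longrightarrow> sum (ex j) UNIV = k"
  shows "laplacian (monomial_sum J c ex) (t *\<^sub>R z) = t ^ (k - 2) * laplacian (monomial_sum J c ex) z"
  unfolding laplacian_monomial_sum monomial_sum_def sum_distrib_left
proof (rule sum.cong[OF refl])
  fix p :: "'j \<times> 'n" assume p: "p \<in> J \<times> UNIV"
  show "laplacian_coeff c ex p * monomial (laplacian_exp ex p) (t *\<^sub>R z)
      = t ^ (k - 2) * (laplacian_coeff c ex p * monomial (laplacian_exp ex p) z)"
  proof (cases "ex (fst p) (snd p) \<ge> 2")
    case True
    have "sum (laplacian_exp ex p) UNIV = k - 2"
      using sum_fun_upd_UNIV[of "ex (fst p)" "snd p" "ex (fst p) (snd p) - 2"] deg[of "fst p"] p True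
        member_le_sum[of "snd p" UNIV "ex (fst p)"]
      by (auto simp: laplacian_exp_def)
    then show ?thesis by (simp add: monomial_scaleR)
  next
    case False
    then have "laplacian_coeff c ex p = 0"
      by (auto simp: laplacian_coeff_def less_2_cases_iff)
    then show ?thesis by simp
  qed
qed

lemma laplacian_monomial_sum_eq_0:
  fixes ex :: "'j \<Rightarrow> 'n::finite \<Rightarrow> nat"
  assumes deg: "\<And>j. j \<in> J \<Longrightarrow> sum (ex j) UNIV = k" and "k < 2"
  shows "laplacian (monomial_sum J c ex) z = 0"
  unfolding laplacian_monomial_sum monomial_sum_def
proof (rule sum.neutral, rule ballI)
  fix p :: "'j \<times> 'n" assume p: "p \<in> J \<times> UNIV"
  have "ex (fst p) (snd p) \<le> k"
    using member_le_sum[of "snd p" UNIV "ex (fst p)"] deg[of "fst p"] p by auto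
  with \<open>k < 2\<close> have "laplacian_coeff c ex p = 0"
    by (auto simp: laplacian_coeff_def less_2_cases_iff)
  then show "laplacian_coeff c ex p * monomial (laplacian_exp ex p) z = 0" by simp
qed

lemma integral_monomial_sum_odd_degree:
  assumes K: "continuous_on {0<..} K" and e: "e > 0" and J: "finite J"
    and deg: "\<And>j. j \<in> J \<Longrightarrow> sum (ex j) UNIV = k" and "odd k"
  shows "integral (annulus e) (\<lambda>z. monomial_sum J c ex z * K (norm z)) = 0"
  unfolding integral_monomial_sum[OF K e J]
proof (rule sum.neutral, rule ballI)
  fix j assume j: "j \<in> J"
  obtain i where "odd (ex j i)"
    using deg[OF j] \<open>odd k\<close> dvd_sum[of UNIV 2 "ex j"] by blast
  then show "c j * moment K e (ex j) = 0"
    using moment_eq_0_if_odd[OF K e, of "ex j" i] by simp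
qed

text \<open>By \<open>moment_eq_gaussian\<close> both sides are multiples of Gaussian moments; the factor \<open>k\<close> is the
  degree \<open>\<Sum>\<^sub>l a\<^sub>l\<close>, which appears because \<open>gaussian_moment\<close> satisfies the same recursion as the
  coefficients \<open>a\<^sub>l (a\<^sub>l - 1)\<close> of the Laplacian.\<close>
lemma moment_laplacian_monomial:
  fixes a :: "'n::finite \<Rightarrow> nat" and i :: 'n
  assumes K: "continuous_on {0<..} K" and K_nonneg: "\<And>t. t > 0 \<Longrightarrow> K t \<ge> 0" and e: "e > 0"
    and deg: "sum a UNIV = k" and "k \<ge> 2" and "even k"
  shows "moment K e ((\<lambda>_. 0)(i := k)) / gaussian_moment k
           * (\<Sum>l\<in>UNIV. real (a l) * (real (a l) - 1) * moment K e (a(l := a l - 2)))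
       = real k * (moment K e ((\<lambda>_. 0)(i := k - 2)) / gaussian_moment (k - 2)) * moment K e a"
proof -
  define A where "A = moment K e ((\<lambda>_. 0)(i := k - 2)) / gaussian_moment (k - 2)"
  define B where "B = moment K e ((\<lambda>_. 0)(i := k)) / gaussian_moment k"
  have moment_A: "moment K e a' = A * gaussian_monomial_moment a'" if "sum a' UNIV = k - 2" for a' :: "'n \<Rightarrow> nat"
    using moment_eq_gaussian[OF K K_nonneg e that, of i] gaussian_moment_even_pos[of "k - 2"] \<open>k \<ge> 2\<close> \<open>even k\<close>
    by (simp add: A_def field_simps)
  have lowered: "real (a l) * (real (a l) - 1) * moment K e (a(l := a l - 2))
      = A * (real (a l) * gaussian_monomial_moment a)" for l
  proof (cases "a l \<ge> 2")
    case True
    then have "sum (a(l := a l - 2)) UNIV = k - 2"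
      using sum_fun_upd_UNIV[of a l "a l - 2"] deg member_le_sum[of l UNIV a] by simp
    then show ?thesis
      using gaussian_monomial_moment_diff2[of a l] by (simp add: moment_A) metis
  next
    case False
    then consider "a l = 0" | "a l = 1" by linarith
    then show ?thesis by cases (simp_all add: gaussian_monomial_moment_odd[of a l])
  qed
  have "B * (\<Sum>l\<in>UNIV. real (a l) * (real (a l) - 1) * moment K e (a(l := a l - 2)))
      = B * (\<Sum>l\<in>UNIV. A * (real (a l) * gaussian_monomial_moment a))"
    by (simp only: lowered)
  also have "\<dots> = A * (B * gaussian_monomial_moment a) * real (sum a UNIV)"
    by (simp add: sum_distrib_left sum_distrib_right of_nat_sum ac_simps)
  also have "\<dots> = real k * A * moment K e a"
    using moment_eq_gaussian[OF K K_nonneg e deg, of i] gaussian_moment_even_pos[OF \<open>even k\<close>] deg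
    by (simp add: B_def field_simps)
  finally show ?thesis by (simp add: A_def B_def)
qed

lemma integral_laplacian_monomial_sum:
  fixes ex :: "'j \<Rightarrow> 'n::finite \<Rightarrow> nat" and i :: 'n
  assumes K: "continuous_on {0<..} K" and K_nonneg: "\<And>t. t > 0 \<Longrightarrow> K t \<ge> 0" and e: "e > 0"
    and J: "finite J" and deg: "\<And>j. j \<in> J \<Longrightarrow> sum (ex j) UNIV = k" and "k \<ge> 2" and "even k"
  shows "real k * (moment K e ((\<lambda>_. 0)(i := k - 2)) / gaussian_moment (k - 2))
           * integral (annulus e) (\<lambda>z. monomial_sum J c ex z * K (norm z))
       = moment K e ((\<lambda>_. 0)(i := k)) / gaussian_moment k
           * integral (annulus e) (\<lambda>z. laplacian (monomial_sum J c ex) z * K (norm z))"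
proof -
  let ?A = "moment K e ((\<lambda>_. 0)(i := k - 2)) / gaussian_moment (k - 2)"
  let ?B = "moment K e ((\<lambda>_. 0)(i := k)) / gaussian_moment k"
  have JU: "finite (J \<times> (UNIV :: 'n set))" using J by simp
  have "?B * integral (annulus e) (\<lambda>z. laplacian (monomial_sum J c ex) z * K (norm z))
      = (\<Sum>j\<in>J. ?B * (\<Sum>l\<in>UNIV. laplacian_coeff c ex (j, l) * moment K e (laplacian_exp ex (j, l))))"
    unfolding laplacian_monomial_sum integral_monomial_sum[OF K e JU]
    by (simp add: sum.cartesian_product sum_distrib_left)
  also have "\<dots> = (\<Sum>j\<in>J. c j * (real k * ?A * moment K e (ex j)))"
  proof (rule sum.cong[OF refl])
    fix j assume "j \<in> J"
    let ?S = "\<Sum>l\<in>UNIV. real (ex j l) * (real (ex j l) - 1) * moment K e ((ex j)(l := ex j l - 2))"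
    have "(\<Sum>l\<in>UNIV. laplacian_coeff c ex (j, l) * moment K e (laplacian_exp ex (j, l))) = c j * ?S"
      by (simp add: laplacian_coeff_def laplacian_exp_def sum_distrib_left mult.assoc)
    then have "?B * (\<Sum>l\<in>UNIV. laplacian_coeff c ex (j, l) * moment K e (laplacian_exp ex (j, l)))
        = c j * (?B * ?S)"
      by (simp only: mult.left_commute[of ?B "c j"])
    also have "\<dots> = c j * (real k * ?A * moment K e (ex j))"
      by (simp only: moment_laplacian_monomial[OF K K_nonneg e deg[OF \<open>j \<in> J\<close>] \<open>k \<ge> 2\<close> \<open>even k\<close>])
    finally show "?B * (\<Sum>l\<in>UNIV. laplacian_coeff c ex (j, l) * moment K e (laplacian_exp ex (j, l)))
        = c j * (real k * ?A * moment K e (ex j))" .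
  qed
  also have "\<dots> = real k * ?A * (\<Sum>j\<in>J. c j * moment K e (ex j))"
    unfolding sum_distrib_left by (rule sum.cong[OF refl]) (rule mult.left_commute)
  also have "\<dots> = real k * ?A * integral (annulus e) (\<lambda>z. monomial_sum J c ex z * K (norm z))"
    by (simp only: integral_monomial_sum[OF K e J])
  finally show ?thesis by simp
qed

section \<open>Positivity of even moments\<close>

lemma integral_pos_if_pos_at:
  fixes g :: "'a::euclidean_space \<Rightarrow> real"
  assumes int: "g integrable_on S" and nonneg: "\<And>z. z \<in> S \<Longrightarrow> 0 \<le> g z"
    and "p \<in> interior S" "isCont g p" "g p > 0"
  shows "integral S g > 0"
proof -
  obtain r where r: "r > 0" "ball p r \<subseteq> S"
    using \<open>p \<in> interior S\<close> mem_interior by blast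
  obtain d where d: "d > 0" "\<And>z. dist z p < d \<Longrightarrow> dist (g z) (g p) < g p / 2"
    using \<open>isCont g p\<close> \<open>g p > 0\<close> unfolding continuous_at_eps_delta by (metis half_gt_zero)
  define B where "B = ball p (min r d)"
  have B: "B \<subseteq> S" "min r d > 0" using r d by (auto simp: B_def)
  define h where "h = (\<lambda>z. if z \<in> B then g p / 2 else 0)"
  have "(\<lambda>_. g p / 2) integrable_on B \<inter> S"
    using B by (intro integrable_on_const) (simp add: Int_absorb2 B_def)
  then have int_h: "h integrable_on S"
    by (simp add: h_def integrable_restrict_Int)
  have "integral S h = integral B (\<lambda>z. g p / 2)"
    unfolding h_def integral_restrict_Int using B by (simp add: Int_absorb2)
  also have "\<dots> = measure lborel B * (g p / 2)"
    using lmeasure_integral[of B] integral_mult_left[of B "\<lambda>x. 1" "g p / 2"]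
    by (simp add: B_def measure_completion)
  also have "\<dots> > 0"
    using B \<open>g p > 0\<close> by (simp add: B_def content_ball_pos)
  finally have "integral S h > 0" .
  moreover have "integral S h \<le> integral S g"
  proof (rule integral_le[OF int_h int])
    fix z assume "z \<in> S"
    show "h z \<le> g z"
    proof (cases "z \<in> B")
      case True
      then have "\<bar>g z - g p\<bar> < g p / 2"
        using d(2)[of z] by (simp add: B_def dist_real_def dist_commute)
      then have "g p / 2 \<le> g z" by linarith
      then show ?thesis using True by (simp add: h_def)
    qed (simp add: h_def nonneg \<open>z \<in> S\<close>)
  qed
  ultimately show ?thesis by linarith
qed

lemma integral_annulus_antimono:
  fixes q :: "'a::euclidean_space \<Rightarrow> real"
  assumes K: "continuous_on {0<..} K" and q: "continuous_on UNIV q"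
    and nonneg: "\<And>z. z \<noteq> 0 \<Longrightarrow> 0 \<le> q z * K (norm z)" and "0 < e" "e \<le> e'"
  shows "integral (annulus e') (\<lambda>z. q z * K (norm z)) \<le> integral (annulus e) (\<lambda>z. q z * K (norm z))"
proof (rule integral_subset_le)
  have "1/e' \<le> 1/e"
    using \<open>0 < e\<close> \<open>e \<le> e'\<close> by (intro divide_left_mono) auto
  then show "annulus e' \<subseteq> annulus e"
    using \<open>e \<le> e'\<close> by (auto simp: mem_annulus)
  show "\<forall>z\<in>annulus e. 0 \<le> q z * K (norm z)"
    using \<open>0 < e\<close> by (auto intro: nonneg simp: mem_annulus)
qed (use assms in \<open>auto intro: integrable_on_annulus\<close>)

lemma moment_single_eventually_ge:
  fixes i :: "'n::finite"
  assumes K: "continuous_on {0<..} K" and K_nonneg: "\<And>t. t > 0 \<Longrightarrow> K t \<ge> 0"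
    and "t0 > 0" "K t0 > 0" and "even k"
  shows "\<exists>c>0. \<forall>\<^sub>F e in at_right 0. c \<le> moment K e ((\<lambda>_. 0)(i := k))"
proof -
  define e0 where "e0 = min (t0/2) (1/(2*t0))"
  have e0: "e0 > 0" using \<open>t0 > 0\<close> by (simp add: e0_def)
  define g where "g = (\<lambda>z::real^'n. z$i ^ k * K (norm z))"
  have moment_eq: "moment K e ((\<lambda>_. 0)(i := k)) = integral (annulus e) g" for e
    by (simp add: moment_def monomial_single g_def)
  have g_nonneg: "0 \<le> g z" if "z \<noteq> 0" for z
    using that \<open>even k\<close> K_nonneg by (simp add: g_def zero_le_even_power)
  have "e0 < t0" "t0 < 1/e0"
    using \<open>t0 > 0\<close> by (auto simp: e0_def min_def field_simps)
  then have "t0 *\<^sub>R axis i (1::real) \<in> ball 0 (1/e0) - cball 0 e0"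
    using \<open>t0 > 0\<close> by simp
  moreover have "ball 0 (1/e0) - cball 0 e0 \<subseteq> annulus e0"
    by (auto simp: annulus_def)
  ultimately have "t0 *\<^sub>R axis i (1::real) \<in> interior (annulus e0)"
    by (meson interior_maximal open_Diff open_ball closed_cball in_mono)
  moreover have "isCont g (t0 *\<^sub>R axis i (1::real))"
    using K \<open>t0 > 0\<close> unfolding g_def
    by (intro continuous_intros continuous_at_compose[of _ norm K, unfolded o_def])
       (simp_all add: continuous_on_eq_continuous_at)
  moreover have "0 \<le> g z" if "z \<in> annulus e0" for z
  proof -
    have "z \<noteq> 0" using that e0 by (auto simp: mem_annulus)
    then show ?thesis by (rule g_nonneg)
  qed
  ultimately have "integral (annulus e0) g > 0"
    using \<open>t0 > 0\<close> \<open>K t0 > 0\<close> e0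
    by (intro integral_pos_if_pos_at integrable_on_annulus[OF K, of _ "\<lambda>z. z$i ^ k", folded g_def])
       (auto simp: g_def intro!: continuous_intros)
  moreover have "\<forall>\<^sub>F e in at_right 0. integral (annulus e0) g \<le> moment K e ((\<lambda>_. 0)(i := k))"
    using eventually_at_right_real[OF e0]
  proof eventually_elim
    case (elim e)
    then show ?case
      unfolding moment_eq g_def
      by (intro integral_annulus_antimono[OF K, of "\<lambda>z. z$i ^ k"])
         (auto intro!: continuous_intros g_nonneg[unfolded g_def])
  qed
  ultimately show ?thesis by blast
qed

section \<open>Taylor expansion of a homogeneous polynomial\<close>

definition hom_polyfun :: "nat \<Rightarrow> (('n::finite \<Rightarrow> nat) \<Rightarrow> real) \<Rightarrow> real^'n \<Rightarrow> real" where
  "hom_polyfun m b = monomial_sum {a. sum a UNIV = m} b id"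

lemma hom_poly_eq_range_hom_polyfun: "hom_poly m = range (hom_polyfun m)"
  by (auto simp: hom_poly_def hom_polyfun_def monomial_sum_def monomial_def fun_eq_iff)

lemma finite_bounded_exponents: "finite {a :: 'n::finite \<Rightarrow> nat. \<forall>i. a i \<le> m}"
proof -
  have "{a :: 'n \<Rightarrow> nat. \<forall>i. a i \<le> m} = PiE UNIV (\<lambda>_. {..m})"
    by (auto simp: PiE_UNIV_domain)
  then show ?thesis by (simp add: finite_PiE)
qed

lemma finite_exponents_of_degree: "finite {a :: 'n::finite \<Rightarrow> nat. sum a UNIV = m}"
  by (rule finite_subset[OF _ finite_bounded_exponents[of m]])
     (auto intro: order_trans[OF member_le_sum[of _ UNIV], rotated])

text \<open>The terms of the binomial expansion of \<open>monomial a (x + z)\<close> are indexed by pairs \<open>(a, d)\<close>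
  with \<open>d \<le> a\<close>; \<open>taylor_index m k\<close> collects those of degree \<open>m\<close> in \<open>x + z\<close> and degree \<open>k\<close> in \<open>z\<close>.\<close>
definition taylor_index :: "nat \<Rightarrow> nat \<Rightarrow> (('n::finite \<Rightarrow> nat) \<times> ('n \<Rightarrow> nat)) set" where
  "taylor_index m k = {(a, d). sum a UNIV = m \<and> (\<forall>i. d i \<le> a i) \<and> sum d UNIV = k}"

definition taylor_coeff ::
    "(('n::finite \<Rightarrow> nat) \<Rightarrow> real) \<Rightarrow> real^'n \<Rightarrow> ('n \<Rightarrow> nat) \<times> ('n \<Rightarrow> nat) \<Rightarrow> real" where
  "taylor_coeff b x p = b (fst p) * (\<Prod>i\<in>UNIV. real (fst p i choose snd p i) * x$i ^ (fst p i - snd p i))"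

definition taylor_part :: "nat \<Rightarrow> (('n::finite \<Rightarrow> nat) \<Rightarrow> real) \<Rightarrow> nat \<Rightarrow> real^'n \<Rightarrow> real^'n \<Rightarrow> real" where
  "taylor_part m b k x = monomial_sum (taylor_index m k) (taylor_coeff b x) snd"

lemma finite_taylor_index: "finite (taylor_index m k)"
proof (rule finite_subset)
  show "taylor_index m k \<subseteq> {a. \<forall>i. a i \<le> m} \<times> {d. \<forall>i. d i \<le> m}"
    by (auto simp: taylor_index_def intro: order_trans[OF _ member_le_sum[of _ UNIV]])
qed (intro finite_cartesian_product finite_bounded_exponents)

lemma taylor_index_degree: "p \<in> taylor_index m k \<Longrightarrow> sum (snd p) UNIV = k"
  by (auto simp: taylor_index_def)

lemma monomial_add:
  "monomial a (x + z)
     = (\<Sum>d\<in>PiE UNIV (\<lambda>i. {..a i}). (\<Prod>i\<in>UNIV. real (a i choose d i) * x$i ^ (a i - d i)) * monomial d z)"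
proof -
  have binomial: "(x$i + z$i) ^ n = (\<Sum>d\<le>n. real (n choose d) * z$i ^ d * x$i ^ (n - d))" for i n
    using binomial_ring[of "z$i" "x$i" n] by (simp add: add.commute)
  have "monomial a (x + z) = (\<Prod>i\<in>UNIV. \<Sum>d\<le>a i. real (a i choose d) * z$i ^ d * x$i ^ (a i - d))"
    unfolding monomial_def by (simp add: binomial)
  also have "\<dots> = (\<Sum>d\<in>PiE UNIV (\<lambda>i. {..a i}). \<Prod>i\<in>UNIV. real (a i choose d i) * z$i ^ d i * x$i ^ (a i - d i))"
    by (rule prod_sum_PiE) auto
  also have "\<dots> = (\<Sum>d\<in>PiE UNIV (\<lambda>i. {..a i}). (\<Prod>i\<in>UNIV. real (a i choose d i) * x$i ^ (a i - d i)) * monomial d z)"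
    by (simp add: monomial_def prod.distrib[symmetric] ac_simps)
  finally show ?thesis .
qed

lemma hom_polyfun_add:
  fixes x z :: "real^'n::finite"
  shows "hom_polyfun m b (x + z) = (\<Sum>k\<le>m. taylor_part m b k x z)"
proof -
  define S where "S = Sigma {a :: 'n \<Rightarrow> nat. sum a UNIV = m} (\<lambda>a. PiE UNIV (\<lambda>i. {..a i}))"
  have finite_S: "finite S"
    unfolding S_def by (intro finite_SigmaI finite_exponents_of_degree finite_PiE) auto
  have S_iff: "p \<in> S \<longleftrightarrow> sum (fst p) UNIV = m \<and> (\<forall>i. snd p i \<le> fst p i)" for p
    by (cases p) (auto simp: S_def PiE_UNIV_domain)
  have "hom_polyfun m b (x + z)
      = (\<Sum>a\<in>{a. sum a UNIV = m}. \<Sum>d\<in>PiE UNIV (\<lambda>i. {..a i}). taylor_coeff b x (a, d) * monomial d z)"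
    by (simp add: hom_polyfun_def monomial_sum_def monomial_add taylor_coeff_def sum_distrib_left mult.assoc)
  also have "\<dots> = (\<Sum>(a, d)\<in>S. taylor_coeff b x (a, d) * monomial d z)"
    unfolding S_def by (rule sum.Sigma) (auto intro!: finite_exponents_of_degree finite_PiE)
  also have "\<dots> = (\<Sum>p\<in>S. taylor_coeff b x p * monomial (snd p) z)"
    by (simp add: case_prod_beta)
  also have "\<dots> = (\<Sum>k\<le>m. \<Sum>p\<in>{p \<in> S. sum (snd p) UNIV = k}. taylor_coeff b x p * monomial (snd p) z)"
    using finite_S S_iff
    by (intro sum.group[symmetric]) (auto intro!: sum_mono)
  also have "\<dots> = (\<Sum>k\<le>m. taylor_part m b k x z)"
    by (simp add: taylor_part_def monomial_sum_def taylor_index_def S_iff case_prod_unfold)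
  finally show ?thesis .
qed

lemma taylor_part_scaleR: "taylor_part m b k x (t *\<^sub>R z) = t ^ k * taylor_part m b k x z"
  unfolding taylor_part_def by (rule monomial_sum_scaleR) (simp add: taylor_index_degree)

lemma taylor_part_scaleR_point:
  fixes x :: "real^'n::finite"
  shows "taylor_part m b k (s *\<^sub>R x) z = s ^ (m - k) * taylor_part m b k x z"
  unfolding taylor_part_def monomial_sum_def sum_distrib_left
proof (rule sum.cong[OF refl])
  fix p :: "('n \<Rightarrow> nat) \<times> ('n \<Rightarrow> nat)" assume "p \<in> taylor_index m k"
  then have le: "\<forall>i. snd p i \<le> fst p i" and deg: "sum (fst p) UNIV = m" "sum (snd p) UNIV = k"
    by (auto simp: taylor_index_def)
  have "(\<Sum>i\<in>UNIV. fst p i - snd p i) = m - k"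
    using deg sum_subtractf_nat[of UNIV "snd p" "fst p"] le by simp
  then have "(\<Prod>i\<in>UNIV. s ^ (fst p i - snd p i)) = s ^ (m - k)"
    by (simp add: power_sum[symmetric])
  then show "taylor_coeff b (s *\<^sub>R x) p * monomial (snd p) z = s ^ (m - k) * (taylor_coeff b x p * monomial (snd p) z)"
    by (simp add: taylor_coeff_def power_mult_distrib prod.distrib ac_simps)
qed

lemma taylor_part_0: "taylor_part m b 0 x z = hom_polyfun m b x"
proof -
  have "taylor_part m b k x 0 = 0" if "k \<noteq> 0" for k
    using taylor_part_scaleR[of m b k x 0 0] that by (simp add: power_0_left)
  then have "hom_polyfun m b (x + 0) = taylor_part m b 0 x 0"
    unfolding hom_polyfun_add by (simp add: sum.atMost_shift)
  then show ?thesis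
    using taylor_part_scaleR[of m b 0 x 0 z] by simp
qed

lemma laplacian_sum_monomial_sum:
  assumes "finite S" and "\<And>k. k \<in> S \<Longrightarrow> finite (J k)"
  shows "laplacian (\<lambda>z. \<Sum>k\<in>S. monomial_sum (J k) c ex z) y = (\<Sum>k\<in>S. laplacian (monomial_sum (J k) c ex) y)"
proof -
  define f where "f j i = laplacian_coeff c ex (j, i) * monomial (laplacian_exp ex (j, i)) y" for j i
  have "(\<lambda>z. \<Sum>k\<in>S. monomial_sum (J k) c ex z) = monomial_sum (Sigma S J) (\<lambda>p. c (snd p)) (\<lambda>p. ex (snd p))"
    using assms by (simp add: fun_eq_iff monomial_sum_def sum.Sigma split_beta)
  then have "laplacian (\<lambda>z. \<Sum>k\<in>S. monomial_sum (J k) c ex z) y = (\<Sum>p\<in>Sigma S J. \<Sum>i\<in>UNIV. f (snd p) i)"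
    by (simp add: laplacian_monomial_sum monomial_sum_def sum.cartesian_product f_def
        laplacian_coeff_def laplacian_exp_def split_beta)
  also have "\<dots> = (\<Sum>k\<in>S. \<Sum>j\<in>J k. \<Sum>i\<in>UNIV. f j i)"
    using assms by (intro sum.Sigma[of S J "\<lambda>k j. \<Sum>i\<in>UNIV. f j i", unfolded case_prod_unfold, symmetric]) auto
  also have "\<dots> = (\<Sum>k\<in>S. laplacian (monomial_sum (J k) c ex) y)"
    by (simp add: laplacian_monomial_sum monomial_sum_def sum.cartesian_product f_def)
  finally show ?thesis .
qed

lemma laplacian_hom_polyfun_add:
  "laplacian (hom_polyfun m b) (x + z) = (\<Sum>k\<le>m. laplacian (taylor_part m b k x) z)"
proof -
  have "laplacian (hom_polyfun m b) (x + z) = laplacian (\<lambda>w. hom_polyfun m b (x + w)) z"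
    by (simp add: laplacian_def add.assoc)
  also have "\<dots> = (\<Sum>k\<le>m. laplacian (taylor_part m b k x) z)"
    unfolding hom_polyfun_add taylor_part_def
    by (rule laplacian_sum_monomial_sum) (simp_all add: finite_taylor_index)
  finally show ?thesis .
qed

lemma laplacian_taylor_part_scaleR:
  "laplacian (taylor_part m b k x) (t *\<^sub>R z) = t ^ (k - 2) * laplacian (taylor_part m b k x) z"
  unfolding taylor_part_def by (rule laplacian_monomial_sum_scaleR) (simp add: taylor_index_degree)

lemma laplacian_taylor_part_low: "k < 2 \<Longrightarrow> laplacian (taylor_part m b k x) z = 0"
  unfolding taylor_part_def by (rule laplacian_monomial_sum_eq_0) (simp_all add: taylor_index_degree)

lemma LK_trunc_hom_polyfun:
  assumes K: "continuous_on {0<..} K" and e: "e > 0"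
  shows "LK_trunc K (hom_polyfun m b) x e
     = - (\<Sum>k\<in>{1..m}. integral (annulus e) (\<lambda>z. taylor_part m b k x z * K (norm z)))"
proof -
  have "hom_polyfun m b x - hom_polyfun m b (x + z) = - (\<Sum>k\<in>{1..m}. taylor_part m b k x z)" for z
    unfolding hom_polyfun_add atMost_atLeast0 sum.atLeast_Suc_atMost[OF le0] taylor_part_0 by simp
  then have "LK_trunc K (hom_polyfun m b) x e
      = integral (annulus e) (\<lambda>z. - (\<Sum>k\<in>{1..m}. taylor_part m b k x z * K (norm z)))"
    by (simp add: LK_trunc_def annulus_def sum_distrib_right)
  also have "\<dots> = - (\<Sum>k\<in>{1..m}. integral (annulus e) (\<lambda>z. taylor_part m b k x z * K (norm z)))"
    by (simp add: integral_sum integrable_on_annulus[OF K e] taylor_part_def continuous_on_monomial_sum)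
  finally show ?thesis .
qed

section \<open>The truncated operator on homogeneous polynomials\<close>

lemma laplacian_hom_polyfun_low_degree: "m < 2 \<Longrightarrow> laplacian (hom_polyfun m b) x = 0"
  unfolding hom_polyfun_def by (rule laplacian_monomial_sum_eq_0) auto

lemma laplacian_taylor_part_2:
  assumes "2 \<le> m"
  shows "laplacian (taylor_part m b 2 x) z = laplacian (hom_polyfun m b) x"
proof -
  have vanish: "laplacian (taylor_part m b k x) 0 = 0" if "k \<noteq> 2" for k
  proof (cases "k < 2")
    case False
    with that have "k - 2 \<noteq> 0" by simp
    then show ?thesis using laplacian_taylor_part_scaleR[of m b k x 0 0] by (simp add: power_0_left)
  qed (rule laplacian_taylor_part_low)
  have "laplacian (hom_polyfun m b) (x + 0) = (\<Sum>k\<le>m. laplacian (taylor_part m b k x) 0)"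
    by (rule laplacian_hom_polyfun_add)
  also have "\<dots> = laplacian (taylor_part m b 2 x) 0"
    using assms by (subst sum.remove[of _ 2]) (auto intro!: sum.neutral vanish)
  also have "\<dots> = laplacian (taylor_part m b 2 x) z"
    using laplacian_taylor_part_scaleR[of m b 2 x 0 z] by simp
  finally show ?thesis by simp
qed

text \<open>Each Taylor part is homogeneous in \<open>z\<close>, so the vanishing of \<open>\<Delta>u (x + t z)\<close> for all \<open>t\<close>
  separates into the vanishing of the Laplacian of every part.\<close>
lemma laplacian_taylor_part_eq_0:
  assumes harmonic: "\<And>y. laplacian (hom_polyfun m b) y = 0" and "k \<le> m"
  shows "laplacian (taylor_part m b k x) z = 0"
proof -
  have "(\<Sum>k\<le>m. laplacian (taylor_part m b k x) z * t ^ k) = 0" for t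
  proof -
    have "laplacian (taylor_part m b k x) z * t ^ k = t^2 * laplacian (taylor_part m b k x) (t *\<^sub>R z)" for k
    proof (cases "k < 2")
      case False
      then have "k = 2 + (k - 2)" by simp
      then have "t ^ k = t^2 * t^(k - 2)" by (metis power_add)
      then show ?thesis by (simp add: laplacian_taylor_part_scaleR)
    qed (simp add: laplacian_taylor_part_low)
    then have "(\<Sum>k\<le>m. laplacian (taylor_part m b k x) z * t ^ k)
        = t^2 * laplacian (hom_polyfun m b) (x + t *\<^sub>R z)"
      by (simp add: laplacian_hom_polyfun_add sum_distrib_left)
    then show ?thesis by (simp add: harmonic)
  qed
  then show ?thesis
    using polyfun_eq_0[of "\<lambda>k. laplacian (taylor_part m b k x) z" m] \<open>k \<le> m\<close> by auto
qed

lemma integral_taylor_part_eq_0_if_harmonic: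
  fixes b :: "('n::finite \<Rightarrow> nat) \<Rightarrow> real" and i :: 'n
  assumes K: "continuous_on {0<..} K" and K_nonneg: "\<And>t. t > 0 \<Longrightarrow> K t \<ge> 0" and e: "e > 0"
    and harmonic: "\<And>y. laplacian (hom_polyfun m b) y = 0"
    and "k \<le> m" "2 \<le> k" "even k" and moment_pos: "moment K e ((\<lambda>_. 0)(i := k - 2)) > 0"
  shows "integral (annulus e) (\<lambda>z. taylor_part m b k x z * K (norm z)) = 0"
proof -
  define A where "A = real k * (moment K e ((\<lambda>_. 0)(i := k - 2)) / gaussian_moment (k - 2))"
  have "A * integral (annulus e) (\<lambda>z. taylor_part m b k x z * K (norm z))
    = moment K e ((\<lambda>_. 0)(i := k)) / gaussian_moment k
      * integral (annulus e) (\<lambda>z. laplacian (taylor_part m b k x) z * K (norm z))"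
    unfolding A_def taylor_part_def
    by (rule integral_laplacian_monomial_sum[OF K K_nonneg e finite_taylor_index
          taylor_index_degree \<open>2 \<le> k\<close> \<open>even k\<close>])
  also have "\<dots> = 0"
    using \<open>k \<le> m\<close> by (simp add: laplacian_taylor_part_eq_0[OF harmonic])
  finally have "A * integral (annulus e) (\<lambda>z. taylor_part m b k x z * K (norm z)) = 0" .
  moreover have "A > 0"
    using moment_pos \<open>even k\<close> \<open>2 \<le> k\<close> unfolding A_def
    by (intro mult_pos_pos divide_pos_pos gaussian_moment_even_pos) auto
  ultimately show ?thesis by simp
qed

lemma LK_trunc_tendsto_0_if_harmonic:
  fixes b :: "('n::finite \<Rightarrow> nat) \<Rightarrow> real"
  assumes K: "continuous_on {0<..} K" and K_nonneg: "\<And>t. t > 0 \<Longrightarrow> K t \<ge> 0"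
    and K_pos: "2 \<le> m \<Longrightarrow> \<exists>t>0. K t > 0"
    and harmonic: "\<And>y. laplacian (hom_polyfun m b) y = 0"
  shows "(LK_trunc K (hom_polyfun m b) x \<longlongrightarrow> 0) (at_right 0)"
proof -
  fix i :: 'n
  have part_vanishes: "\<forall>\<^sub>F e in at_right 0. integral (annulus e) (\<lambda>z. taylor_part m b k x z * K (norm z)) = 0"
    if k: "k \<in> {1..m}" for k
  proof (cases "odd k")
    case True
    show ?thesis
      using eventually_at_right_less[of 0]
    proof eventually_elim
      case (elim e)
      show ?case
        unfolding taylor_part_def
        by (rule integral_monomial_sum_odd_degree[OF K elim finite_taylor_index])
           (use True in \<open>simp_all add: taylor_index_degree\<close>)
    qed
  next
    case False
    with k have "k \<ge> 2" "even k" by auto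
    obtain t0 where "t0 > 0" "K t0 > 0" using K_pos k \<open>k \<ge> 2\<close> by auto
    obtain c where "c > 0" and moment_ge: "\<forall>\<^sub>F e in at_right 0. c \<le> moment K e ((\<lambda>_. 0)(i := k - 2))"
      using moment_single_eventually_ge[OF K K_nonneg \<open>t0 > 0\<close> \<open>K t0 > 0\<close>, of "k - 2" i] \<open>even k\<close> \<open>k \<ge> 2\<close>
      by auto
    from moment_ge eventually_at_right_less[of 0]
    show ?thesis
    proof eventually_elim
      case (elim e)
      then show ?case
        using k \<open>c > 0\<close> \<open>k \<ge> 2\<close> \<open>even k\<close>
        by (intro integral_taylor_part_eq_0_if_harmonic[OF K K_nonneg _ harmonic, of _ _ i]) auto
    qed
  qed
  have "\<forall>\<^sub>F e in at_right 0. \<forall>k\<in>{1..m}. integral (annulus e) (\<lambda>z. taylor_part m b k x z * K (norm z)) = 0"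
    by (rule eventually_ball_finite) (auto intro: part_vanishes)
  then have "\<forall>\<^sub>F e in at_right 0. LK_trunc K (hom_polyfun m b) x e = 0"
    using eventually_at_right_less[of 0]
  proof eventually_elim
    case (elim e)
    then show ?case by (simp add: LK_trunc_hom_polyfun[OF K])
  qed
  then show ?thesis by (rule tendsto_eventually)
qed

lemma polyfun_tendsto_0_imp_coeff_tendsto_0:
  fixes c :: "nat \<Rightarrow> 'a \<Rightarrow> real"
  assumes "\<And>x. ((\<lambda>y. \<Sum>i\<le>d. c i y * x ^ i) \<longlongrightarrow> 0) F" and "i \<le> d"
  shows "(c i \<longlongrightarrow> 0) F"
  using assms
proof (induction d arbitrary: c i)
  case 0
  then show ?case using "0.prems"(1)[of 1] by simp
next
  case (Suc d)
  text \<open>Comparing the values at \<open>2 x\<close> and at \<open>x\<close> removes the top coefficient.\<close>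
  define c' where "c' i y = c i y * (2 ^ i - 2 ^ Suc d)" for i y
  have "((\<lambda>y. \<Sum>i\<le>d. c' i y * x ^ i) \<longlongrightarrow> 0) F" for x
  proof -
    have "((\<lambda>y. (\<Sum>i\<le>Suc d. c i y * (2*x) ^ i) - 2 ^ Suc d * (\<Sum>i\<le>Suc d. c i y * x ^ i))
        \<longlongrightarrow> 0 - 2 ^ Suc d * 0) F"
      by (intro tendsto_intros Suc.prems(1))
    moreover have "(\<Sum>i\<le>Suc d. c i y * (2*x) ^ i) - 2 ^ Suc d * (\<Sum>i\<le>Suc d. c i y * x ^ i)
        = (\<Sum>i\<le>d. c' i y * x ^ i)" for y
      by (simp add: c'_def sum_distrib_left sum_subtractf[symmetric] power_mult_distrib algebra_simps)
    ultimately show ?thesis by simp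
  qed
  then have lower: "(c i \<longlongrightarrow> 0) F" if "i \<le> d" for i
  proof -
    have "(c' i \<longlongrightarrow> 0) F" by (rule Suc.IH) fact+
    moreover have "(2::real) ^ i < 2 ^ Suc d" using that by (intro power_strict_increasing) auto
    ultimately have "((\<lambda>y. c' i y / (2 ^ i - 2 ^ Suc d)) \<longlongrightarrow> 0 / (2 ^ i - 2 ^ Suc d)) F"
      by (intro tendsto_intros) auto
    with \<open>(2::real) ^ i < 2 ^ Suc d\<close> show ?thesis by (simp add: c'_def)
  qed
  show ?case
  proof (cases "i \<le> d")
    case False
    then have "i = Suc d" using Suc.prems(2) by simp
    have "((\<lambda>y. (\<Sum>i\<le>Suc d. c i y * 1 ^ i) - (\<Sum>i\<le>d. c i y)) \<longlongrightarrow> 0 - (\<Sum>i\<le>d. 0)) F"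
      by (intro tendsto_intros Suc.prems(1) lower) auto
    then show ?thesis using \<open>i = Suc d\<close> by simp
  qed (rule lower)
qed

lemma LK_trunc_hom_polyfun_scaleR:
  assumes K: "continuous_on {0<..} K" and e: "e > 0"
  shows "LK_trunc K (hom_polyfun m b) (s *\<^sub>R x) e
    = (\<Sum>j\<le>m. (if j < m then - integral (annulus e) (\<lambda>z. taylor_part m b (m - j) x z * K (norm z)) else 0) * s ^ j)"
proof -
  let ?I = "\<lambda>k. integral (annulus e) (\<lambda>z. taylor_part m b k x z * K (norm z))"
  have "LK_trunc K (hom_polyfun m b) (s *\<^sub>R x) e = (\<Sum>k=0..m. if k = 0 then 0 else - (s ^ (m - k) * ?I k))"
    by (simp add: LK_trunc_hom_polyfun[OF K e] taylor_part_scaleR_point mult.assoc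
        sum.atLeast_Suc_atMost sum_negf integral_mult_right)
  also have "\<dots> = (\<Sum>j=0..m. if m - j = 0 then 0 else - (s ^ (m - (m - j)) * ?I (m - j)))"
    by (subst sum.atLeastAtMost_rev) (rule sum.cong; simp)
  also have "\<dots> = (\<Sum>j\<le>m. (if j < m then - ?I (m - j) else 0) * s ^ j)"
    by (auto simp: atMost_atLeast0 intro!: sum.cong)
  finally show ?thesis by simp
qed

lemma integral_taylor_part_2:
  fixes b :: "('n::finite \<Rightarrow> nat) \<Rightarrow> real" and i :: 'n
  assumes K: "continuous_on {0<..} K" and K_nonneg: "\<And>t. t > 0 \<Longrightarrow> K t \<ge> 0" and e: "e > 0"
    and "2 \<le> m" and "moment K e ((\<lambda>_. 0)(i := 0)) \<noteq> 0"
  shows "2 * integral (annulus e) (\<lambda>z. taylor_part m b 2 x z * K (norm z))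
    = moment K e ((\<lambda>_. 0)(i := 2)) * laplacian (hom_polyfun m b) x"
proof -
  have "real 2 * (moment K e ((\<lambda>_. 0)(i := 2 - 2)) / gaussian_moment (2 - 2))
      * integral (annulus e) (\<lambda>z. taylor_part m b 2 x z * K (norm z))
    = moment K e ((\<lambda>_. 0)(i := 2)) / gaussian_moment 2
      * integral (annulus e) (\<lambda>z. laplacian (taylor_part m b 2 x) z * K (norm z))"
    unfolding taylor_part_def
    by (rule integral_laplacian_monomial_sum[OF K K_nonneg e finite_taylor_index taylor_index_degree]) simp_all
  also have "\<dots> = moment K e ((\<lambda>_. 0)(i := 2)) * laplacian (hom_polyfun m b) x * moment K e ((\<lambda>_. 0)(i := 0))"
    by (simp add: laplacian_taylor_part_2[OF \<open>2 \<le> m\<close>] moment_def monomial_single)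
  finally show ?thesis
    using \<open>moment K e ((\<lambda>_. 0)(i := 0)) \<noteq> 0\<close> by simp
qed

text \<open>The contributions of the Taylor parts to \<open>LK_trunc\<close> at \<open>s x\<close> are the coefficients of a
  polynomial in \<open>s\<close>, so they tend to \<open>0\<close> separately; the part of degree \<open>2\<close> is a multiple of
  \<open>\<Delta>u(x)\<close> by a factor bounded away from \<open>0\<close>.\<close>
lemma laplacian_eq_0_if_LK_trunc_tendsto_0:
  fixes b :: "('n::finite \<Rightarrow> nat) \<Rightarrow> real"
  assumes K: "continuous_on {0<..} K" and K_nonneg: "\<And>t. t > 0 \<Longrightarrow> K t \<ge> 0"
    and "t0 > 0" "K t0 > 0" and "2 \<le> m"
    and lim: "\<And>y. (LK_trunc K (hom_polyfun m b) y \<longlongrightarrow> 0) (at_right 0)"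
  shows "laplacian (hom_polyfun m b) x = 0"
proof -
  fix i :: 'n
  define I where "I e = integral (annulus e) (\<lambda>z. taylor_part m b 2 x z * K (norm z))" for e
  have "((\<lambda>e. \<Sum>j\<le>m. (if j < m then - integral (annulus e) (\<lambda>z. taylor_part m b (m - j) x z * K (norm z))
      else 0) * s ^ j) \<longlongrightarrow> 0) (at_right 0)" for s
    using lim[of "s *\<^sub>R x"] eventually_at_right_less[of 0]
    by (auto simp: LK_trunc_hom_polyfun_scaleR[OF K] elim: Lim_transform_eventually[OF _ eventually_mono])
  from polyfun_tendsto_0_imp_coeff_tendsto_0[OF this, of "m - 2"]
  have "((\<lambda>e. - I e) \<longlongrightarrow> 0) (at_right 0)"
    using \<open>2 \<le> m\<close> by (simp add: I_def)
  then have I: "(I \<longlongrightarrow> 0) (at_right 0)"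
    using tendsto_minus_cancel_left[of I 0] by simp
  obtain c where "c > 0" and moment2: "\<forall>\<^sub>F e in at_right 0. c \<le> moment K e ((\<lambda>_. 0)(i := 2))"
    using moment_single_eventually_ge[OF K K_nonneg \<open>t0 > 0\<close> \<open>K t0 > 0\<close>, of 2 i] by auto
  obtain c0 where "c0 > 0" and moment0: "\<forall>\<^sub>F e in at_right 0. c0 \<le> moment K e ((\<lambda>_. 0)(i := 0))"
    using moment_single_eventually_ge[OF K K_nonneg \<open>t0 > 0\<close> \<open>K t0 > 0\<close>, of 0 i] by auto
  have bound: "\<forall>\<^sub>F e in at_right 0. c * \<bar>laplacian (hom_polyfun m b) x\<bar> \<le> \<bar>2 * I e\<bar>"
    using moment2 moment0 eventually_at_right_less[of 0]
  proof eventually_elim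
    case (elim e)
    then have "2 * I e = moment K e ((\<lambda>_. 0)(i := 2)) * laplacian (hom_polyfun m b) x"
      unfolding I_def using \<open>c0 > 0\<close> by (intro integral_taylor_part_2[OF K K_nonneg _ \<open>2 \<le> m\<close>]) auto
    then show ?case
      using elim(1) \<open>c > 0\<close> by (simp add: abs_mult mult_right_mono)
  qed
  have "((\<lambda>e. \<bar>2 * I e\<bar>) \<longlongrightarrow> \<bar>2 * 0\<bar>) (at_right 0)"
    by (intro tendsto_intros I)
  then have "c * \<bar>laplacian (hom_polyfun m b) x\<bar> \<le> \<bar>2 * 0\<bar>"
    by (rule tendsto_lowerbound[OF _ bound]) simp
  then show ?thesis
    using \<open>c > 0\<close> by (simp add: mult_le_0_iff)
qed

lemma LK_trunc_tendsto_0_iff_harmonic: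
  fixes b :: "('n::finite \<Rightarrow> nat) \<Rightarrow> real"
  assumes K: "continuous_on {0<..} K" and K_nonneg: "\<And>t. t > 0 \<Longrightarrow> K t \<ge> 0"
    and K_pos: "2 \<le> m \<Longrightarrow> \<exists>t>0. K t > 0"
  shows "(\<forall>y. (LK_trunc K (hom_polyfun m b) y \<longlongrightarrow> 0) (at_right 0))
    \<longleftrightarrow> (\<forall>x. laplacian (hom_polyfun m b) x = 0)"
proof (cases "2 \<le> m")
  case True
  then obtain t0 where "t0 > 0" "K t0 > 0" using K_pos by blast
  then show ?thesis
    using laplacian_eq_0_if_LK_trunc_tendsto_0[OF K K_nonneg _ _ True]
      LK_trunc_tendsto_0_if_harmonic[OF K K_nonneg K_pos] by blast
next
  case False
  then show ?thesis
    using laplacian_hom_polyfun_low_degree[of m b] LK_trunc_tendsto_0_if_harmonic[OF K K_nonneg K_pos]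
    by auto
qed

lemma ex_pos_if_nn_integral_pos:
  fixes K :: "real \<Rightarrow> real"
  assumes "(\<integral>\<^sup>+ t \<in> {0<..}. ennreal (K t * t ^ p) \<partial>lborel) > 0"
  shows "\<exists>t>0. K t > 0"
proof (rule ccontr)
  assume "\<not> (\<exists>t>0. K t > 0)"
  then have vanish: "ennreal (K t * t ^ p) * indicator {0<..} t = 0" for t
    by (auto simp: indicator_def ennreal_eq_0_iff mult_nonpos_nonneg)
  have "(\<integral>\<^sup>+ t \<in> {0<..}. ennreal (K t * t ^ p) \<partial>lborel) = (\<integral>\<^sup>+ t. 0 \<partial>(lborel::real measure))"
    by (rule nn_integral_cong) (rule vanish)
  then show False
    using assms by simp
qed

theorem proposition2p1:
  fixes K :: "real \<Rightarrow> real" and m :: nat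
  assumes N2: "CARD('n::finite) \<ge> 2"
    and Kcont: "continuous_on {0<..} K"
    and Knonneg: "\<And>t. t > 0 \<Longrightarrow> K t \<ge> 0"
    and Kmom: "\<And>i. 2 \<le> i \<Longrightarrow> i \<le> m \<Longrightarrow>
        (\<integral>\<^sup>+ t \<in> {0<..}. ennreal (K t * t ^ (CARD('n) - 1 + i)) \<partial>lborel) > 0"
    and lim: "(\<forall>i j. 2 \<le> j \<and> j < i \<and> i \<le> m \<longrightarrow>
                 (kappa K CARD('n) i j \<longlongrightarrow> 0) (at_right 0))
            \<or> (\<forall>i j. 2 \<le> i \<and> i < j \<and> j \<le> m \<longrightarrow>
                 (kappa K CARD('n) i j \<longlongrightarrow> 0) (at_right 0))"
  shows "(HK K m :: (real^'n \<Rightarrow> real) set) = H1 m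
     \<and> (m \<le> 1 \<longrightarrow> (H1 m :: (real^'n \<Rightarrow> real) set) = hom_poly m)"
proof -
  have K_pos: "\<exists>t>0. K t > 0" if "2 \<le> m"
    using ex_pos_if_nn_integral_pos[OF Kmom[OF order_refl that]] .
  have "u \<in> HK K m \<longleftrightarrow> u \<in> H1 m" if "u \<in> hom_poly m" for u :: "real^'n \<Rightarrow> real"
    using that LK_trunc_tendsto_0_iff_harmonic[OF Kcont Knonneg K_pos]
    by (auto simp: hom_poly_eq_range_hom_polyfun HK_def H1_def LK_zero_at_def)
  then have "(HK K m :: (real^'n \<Rightarrow> real) set) = H1 m"
    by (auto simp: HK_def H1_def)
  moreover have "m \<le> 1 \<Longrightarrow> (H1 m :: (real^'n \<Rightarrow> real) set) = hom_poly m"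
    by (auto simp: H1_def hom_poly_eq_range_hom_polyfun laplacian_hom_polyfun_low_degree)
  ultimately show ?thesis by blast
qed

end
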